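(* Fix $m \in \mathbb{N}$, an integer $k \geq 3$ and $q > q_{k-1}$. Then for every $0 \le i \le m$, $\tau(P_i(q)) \geq \tau(\pi_q(S_{k-1}))$, and $\tau(Q_m(q)) \geq \tau(\pi_q(S_{k-1}))$.
   Context: $q_j$ ($j\ge2$) is the unique root in $(1,2)$ of $x^j - x^{j-1} - \cdots - x - 1 = 0$. For $q \in (1,2)$, $\pi_q((\epsilon_j)_{j\ge1}) = \sum_{j\ge1}\epsilon_j q^{-j}$. Words are written by concatenation, $a^n$ is $n$ repetitions of $a$ and $w^\infty$ the infinite repetition of $w$. A sequence avoids a word $w$ if $w$ does not occur as a block of consecutive entries. $S_{k-1}$ is the set of $(\epsilon_j) \in \{0,1\}^\mathbb{N}$ avoiding $01^{k-1}$ and $10^{k-1}$. $g_{q,k}(x) = q^{-k}x + \sum_{j=1}^{k-1}q^{-j}$ (equal to $f_1^{-(k-1)}\circ f_0^{-1}$ with $f_0(x) = qx$, $f_1(x) = qx-1$), $g_{q,k}^i$ its $i$-fold composition. Define $P_i(q) = g_{q,k}^i(\pi_q(S_{k-1})+1) \cap \big[g_{q,k}^i(1),\ g_{q,k}^i\big(1 + q^{-(m-i)k}\pi_q(0^{k-3}(01^{k-1})^\infty)\big)\big]$ for $0\le i\le m$, and $Q_m(q) = g_{q,k}^m(\pi_q(S_{k-1})) \cap \big[g_{q,k}^m(\pi_q(1^{k-3}(10^{k-1})^\infty)),\ g_{q,k}^m(\pi_q(1^\infty))\big]$. Thickness: for a compact $C \subset \mathbb{R}$, remove from $\mathrm{conv}(C)$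 the bounded gaps (maximal open intervals of $\mathrm{conv}(C)\setminus C$) $G_1, G_2, \dots$ in order of non-increasing length; when $G_n$ is removed it splits a closed interval into a left bridge $B_n^L$ and right bridge $B_n^R$. Then $\tau(C) = \inf_n \min(|B_n^L|/|G_n|, |B_n^R|/|G_n|)$ (independent of tie-breaking; $|\cdot|$ is length). *)

theory Defs
  imports "HOL-Analysis.Analysis"
begin

definition multinacci :: "nat \<Rightarrow> real" where
  "multinacci j = (THE x. 1 < x \<and> x < 2 \<and> x ^ j = (\<Sum>i<j. x ^ i))"

text \<open>0-1 sequences are functions nat => nat; index n here corresponds to index n+1 in the paper.\<close>
definition pi_q :: "real \<Rightarrow> (nat \<Rightarrow> nat) \<Rightarrow> real" where
  "pi_q q eps = (\<Sum>j. real (eps j) / q ^ (Suc j))"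

definition eventually_periodic :: "nat list \<Rightarrow> nat list \<Rightarrow> nat \<Rightarrow> nat" where
  "eventually_periodic u w n =
     (if n < length u then u ! n else w ! ((n - length u) mod length w))"

definition occurs_in :: "nat list \<Rightarrow> (nat \<Rightarrow> nat) \<Rightarrow> bool" where
  "occurs_in w eps \<longleftrightarrow> (\<exists>n. \<forall>i<length w. eps (n + i) = w ! i)"

definition avoids :: "(nat \<Rightarrow> nat) \<Rightarrow> nat list \<Rightarrow> bool" where
  "avoids eps w \<longleftrightarrow> \<not> occurs_in w eps"

definition S_set :: "nat \<Rightarrow> (nat \<Rightarrow> nat) set" where
  "S_set j = {eps. (\<forall>n. eps n \<in> {0, 1}) \<and>
                   avoids eps (0 # replicate j 1) \<and> avoids eps (1 # replicate j 0)}"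

definition g_qk :: "real \<Rightarrow> nat \<Rightarrow> real \<Rightarrow> real" where
  "g_qk q k x = x / q ^ k + (\<Sum>j\<in>{1..k-1}. 1 / q ^ j)"

definition P_set :: "real \<Rightarrow> nat \<Rightarrow> nat \<Rightarrow> nat \<Rightarrow> real set" where
  "P_set q k m i =
     (g_qk q k ^^ i) ` ((\<lambda>x. x + 1) ` (pi_q q ` S_set (k - 1))) \<inter>
     {(g_qk q k ^^ i) 1 ..
      (g_qk q k ^^ i) (1 + pi_q q (eventually_periodic (replicate (k - 3) 0)
                                      (0 # replicate (k - 1) 1)) / q ^ ((m - i) * k))}"

definition Q_set :: "real \<Rightarrow> nat \<Rightarrow> nat \<Rightarrow> real set" where
  "Q_set q k m =
     (g_qk q k ^^ m) ` (pi_q q ` S_set (k - 1)) \<inter>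
     {(g_qk q k ^^ m) (pi_q q (eventually_periodic (replicate (k - 3) 1)
                                  (1 # replicate (k - 1) 0))) ..
      (g_qk q k ^^ m) (pi_q q (eventually_periodic [] [1]))}"

text \<open>Thickness. Bounded gaps of C: maximal open intervals (a,b) of conv(C) - C,
  i.e. pairs a<b of points of C with no point of C strictly between.\<close>
definition gaps :: "real set \<Rightarrow> (real \<times> real) set" where
  "gaps C = {(a, b). a \<in> C \<and> b \<in> C \<and> a < b \<and> {a<..<b} \<inter> C = {}}"

definition glen :: "real \<times> real \<Rightarrow> real" where
  "glen G = snd G - fst G"

definition gap_enum :: "real set \<Rightarrow> (nat \<Rightarrow> real \<times> real) \<Rightarrow> nat set \<Rightarrow> bool" where
  "gap_enum C e I \<longleftrightarrow> (I = UNIV \<or> (\<exists>N. I = {..<N})) \<and> bij_betw e I (gaps C) \<and>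
     (\<forall>i\<in>I. \<forall>j\<in>I. i \<le> j \<longrightarrow> glen (e j) \<le> glen (e i))"

text \<open>When G_n is removed, the closed interval containing it is bounded by the nearest
  endpoints of previously removed gaps (or by min C / max C).\<close>
definition left_bridge_len :: "real set \<Rightarrow> (nat \<Rightarrow> real \<times> real) \<Rightarrow> nat \<Rightarrow> real" where
  "left_bridge_len C e n =
     fst (e n) - Max ({Inf C} \<union> {snd (e j) | j. j < n \<and> snd (e j) \<le> fst (e n)})"

definition right_bridge_len :: "real set \<Rightarrow> (nat \<Rightarrow> real \<times> real) \<Rightarrow> nat \<Rightarrow> real" where
  "right_bridge_len C e n =
     Min ({Sup C} \<union> {fst (e j) | j. j < n \<and> snd (e n) \<le> fst (e j)}) - snd (e n)"

text \<open>Thickness (value +\<infinity> when there are no bounded gaps). The value is independent of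
  the chosen enumeration; we pick one by choice.\<close>
definition thickness :: "real set \<Rightarrow> ereal" where
  "thickness C = (SOME t. \<exists>e I. gap_enum C e I \<and>
      t = (INF n\<in>I. ereal (min (left_bridge_len C e n) (right_bridge_len C e n) / glen (e n))))"

end

theory Submission
  imports Defs
begin

(*
  Thickness does not depend on how gaps of equal length are ordered, so it can be computed
  gap by gap: the bridges of a gap G end at the nearest endpoints of the other gaps that are at
  least as long as G. In this form it is invariant under increasing affine maps, and it does not
  decrease when K is cut down to K \<inter> [a, b], provided a is the minimum of K or the right end
  of a gap of K at least as long as every gap inside [a, b], and symmetrically for b.

  Let s = k - 2 and C = pi_q(S_{k-1}): in a sequence of S_{k-1} every run except the first has
  length at most s. Hence C \<inter> [0, x) = {0} \<union> (\<Union>n\<ge>1. q^-n A), where A is the set of values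
  of sequences of S_{k-1} that start with a run of at most s ones and may follow a zero. Then
  A = (\<Union>r\<in>{1..s}. 1/(q-1) - q^-r A), and A lies in [x, y] with x = pi_q((1 0^s)^\<infinity>) and
  y = pi_q(1^s (0 1^s)^\<infinity>). The hypothesis q > q_{k-1} gives
  y < q x, so the blocks q^-n A are separated by the gaps (y q^-(n+1), x q^-n) of length
  (q x - y) q^-(n+1), while by self-similarity the gaps inside q^-n A are at most
  (q x - y) q^-(n+2). Thus the cut of C at y q^-N satisfies the condition above, and
  P_i(q), Q_m(q) are increasing affine images of such a cut and of its mirror image: their
  prescribed endpoints lie in the gap following y q^-N, with N = k - 2 + (m - i) k.
*)

section \<open>Thickness computed gap by gap\<close>

lemma gaps_disjoint:
  assumes "(a, b) \<in> gaps K" "(a', b') \<in> gaps K" "a < a'"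
  shows "b \<le> a'"
proof -
  have "a' \<notin> {a<..<b}" using assms(1,2) unfolding gaps_def by blast
  then show ?thesis using assms(3) by auto
qed

lemma gaps_eq_if_fst_eq:
  assumes "G \<in> gaps K" "G' \<in> gaps K" "fst G = fst G'"
  shows "G = G'"
proof -
  have "\<not> snd G < snd G'" "\<not> snd G' < snd G"
    using assms by (force simp: gaps_def)+
  then show ?thesis using assms(3) by (simp add: prod_eq_iff)
qed

lemma glen_gap_pos: "G \<in> gaps K \<Longrightarrow> 0 < glen G"
  by (auto simp: gaps_def glen_def)

lemma gapsD:
  "G \<in> gaps K \<Longrightarrow> fst G \<in> K \<and> snd G \<in> K \<and> fst G < snd G \<and> {fst G<..<snd G} \<inter> K = {}"
  by (auto simp: gaps_def)

lemma gap_no_point_between: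
  assumes "(u, v) \<in> gaps K" "c \<in> K"
  shows "c \<le> u \<or> v \<le> c"
proof -
  have "c \<notin> {u<..<v}" using assms unfolding gaps_def by blast
  then show ?thesis by auto
qed

lemma gaps_preimage_mono:
  assumes f: "strict_mono f" and "f ` K \<subseteq> K'" "a \<in> K" "a' \<in> K" "(f a, f a') \<in> gaps K'"
  shows "(a, a') \<in> gaps K"
proof -
  have "a < a'" using assms(5) by (simp add: gaps_def strict_mono_less[OF f])
  moreover have "c \<le> a \<or> a' \<le> c" if "c \<in> K" for c
  proof -
    have "f c \<in> K'" using that assms(2) by blast
    then have "f c \<le> f a \<or> f a' \<le> f c" by (rule gap_no_point_between[OF assms(5)])
    then show ?thesis by (simp add: strict_mono_less_eq[OF f])
  qed
  then have "{a<..<a'} \<inter> K = {}" by fastforce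
  ultimately show ?thesis using assms(3,4) by (simp add: gaps_def)
qed

lemma gaps_preimage_antimono:
  assumes f: "\<And>x y. x < y \<Longrightarrow> f y < f x" and "f ` K \<subseteq> K'" "a \<in> K" "a' \<in> K"
    and "(f a, f a') \<in> gaps K'"
  shows "(a', a) \<in> gaps K"
proof -
  have less: "f x < f y \<longleftrightarrow> y < x" for x y using f by (metis linorder_neqE order.asym)
  then have le: "f x \<le> f y \<longleftrightarrow> y \<le> x" for x y by (meson not_less)
  have "a' < a" using assms(5) by (simp add: gaps_def less)
  moreover have "c \<le> a' \<or> a \<le> c" if "c \<in> K" for c
  proof -
    have "f c \<in> K'" using that assms(2) by blast
    then have "f c \<le> f a \<or> f a' \<le> f c" by (rule gap_no_point_between[OF assms(5)])
    then show ?thesis by (auto simp: le)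
  qed
  then have "{a'<..<a} \<inter> K = {}" by fastforce
  ultimately show ?thesis using assms(3,4) by (simp add: gaps_def)
qed

lemma gap_eq_if_between:
  assumes "(u, v) \<in> gaps K" "a \<in> K" "b \<in> K" "u \<le> a" "a < b" "b \<le> v"
  shows "u = a \<and> v = b"
  using gap_no_point_between[OF assms(1) assms(2)] gap_no_point_between[OF assms(1) assms(3)] assms(4-6)
  by auto

lemma gaps_reflect:
  assumes sym: "(\<lambda>x. c - x) ` K = K" and G: "(u, v) \<in> gaps K"
  shows "(c - v, c - u) \<in> gaps K"
proof (rule gaps_preimage_antimono[where f = "\<lambda>x. c - x"])
  have "u \<in> K" "v \<in> K" using G by (auto simp: gaps_def)
  then show "c - u \<in> K" "c - v \<in> K" using sym by (metis image_eqI)+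
qed (use sym G in auto)

lemma reflect_Int_atLeastAtMost:
  fixes c t :: real
  assumes "(\<lambda>x. c - x) ` K = K"
  shows "K \<inter> {c - t .. c} = (\<lambda>x. c - x) ` (K \<inter> {0 .. t})"
proof -
  have "K \<inter> {c - t .. c} = (\<lambda>x. c - x) ` K \<inter> {c - t .. c}" using assms by simp
  also have "\<dots> = (\<lambda>x. c - x) ` (K \<inter> {0 .. t})" by (auto intro: image_eqI)
  finally show ?thesis .
qed

lemma affine_image_Int_atLeastAtMost:
  fixes \<alpha> \<beta> :: real
  assumes "0 < \<alpha>"
  shows "(\<lambda>x. \<alpha> * x + \<beta>) ` X \<inter> {\<alpha> * a + \<beta> .. \<alpha> * b + \<beta>} = (\<lambda>x. \<alpha> * x + \<beta>) ` (X \<inter> {a..b})"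
  using assms by auto

lemma finite_gaps_glen_ge:
  assumes "bdd_below K" "bdd_above K" "0 < \<epsilon>"
  shows "finite {G \<in> gaps K. \<epsilon> \<le> glen G}"
proof -
  obtain lo hi where K: "K \<subseteq> {lo..hi}"
    using assms(1,2) by (meson atLeastAtMost_iff bdd_above_def bdd_below_def subsetI)
  let ?B = "{G \<in> gaps K. \<epsilon> \<le> glen G}"
  let ?f = "\<lambda>G. \<lfloor>fst G / \<epsilon>\<rfloor>"
  have less: "?f G < ?f G'" if "G \<in> ?B" "G' \<in> ?B" "fst G < fst G'" for G G'
  proof -
    have "snd G \<le> fst G'"
      using gaps_disjoint[of "fst G" "snd G" K "fst G'" "snd G'"] that by auto
    then have "fst G + \<epsilon> \<le> fst G'" using that by (simp add: glen_def)
    then have "(fst G + \<epsilon>) / \<epsilon> \<le> fst G' / \<epsilon>"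
      using assms(3) by (simp add: divide_right_mono)
    then show ?thesis using assms(3) by (simp add: add_divide_distrib) linarith
  qed
  have "inj_on ?f ?B"
    by (rule inj_onI) (metis (no_types, lifting) gaps_eq_if_fst_eq less less_irrefl
        linorder_neq_iff mem_Collect_eq)
  moreover have "?f ` ?B \<subseteq> {\<lfloor>lo / \<epsilon>\<rfloor>..\<lfloor>hi / \<epsilon>\<rfloor>}"
    using K assms(3) by (force simp: gaps_def intro: floor_mono divide_right_mono)
  ultimately show ?thesis
    by (meson finite_atLeastAtMost_int finite_imageD finite_subset)
qed

definition gap_before :: "real \<times> real \<Rightarrow> real \<times> real \<Rightarrow> bool" where
  "gap_before G' G \<longleftrightarrow> glen G < glen G' \<or> (glen G' = glen G \<and> fst G' < fst G)"

definition gap_rank :: "real set \<Rightarrow> real \<times> real \<Rightarrow> nat" where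
  "gap_rank K G = card {G' \<in> gaps K. gap_before G' G}"

lemma finite_gaps_before:
  assumes "bdd_below K" "bdd_above K" "G \<in> gaps K"
  shows "finite {G' \<in> gaps K. gap_before G' G}"
  by (rule finite_subset[OF _ finite_gaps_glen_ge[OF assms(1,2) glen_gap_pos[OF assms(3)]]])
    (auto simp: gap_before_def)

lemma gap_rank_less:
  assumes "bdd_below K" "bdd_above K" "G \<in> gaps K" "G' \<in> gaps K" "gap_before G' G"
  shows "gap_rank K G' < gap_rank K G"
  unfolding gap_rank_def
proof (rule psubset_card_mono[OF finite_gaps_before[OF assms(1-3)]])
  show "{G'' \<in> gaps K. gap_before G'' G'} \<subset> {G'' \<in> gaps K. gap_before G'' G}"
    using assms(4,5) by (auto simp: gap_before_def)
qed

lemma gap_rank_less_iff: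
  assumes "bdd_below K" "bdd_above K" "G \<in> gaps K" "G' \<in> gaps K"
  shows "gap_rank K G' < gap_rank K G \<longleftrightarrow> gap_before G' G"
proof
  assume less: "gap_rank K G' < gap_rank K G"
  have "G' \<noteq> G" using less by auto
  then have "fst G' \<noteq> fst G" using gaps_eq_if_fst_eq assms(3,4) by blast
  then show "gap_before G' G"
    using gap_rank_less[OF assms(1,2,4,3)] less unfolding gap_before_def by fastforce
qed (rule gap_rank_less[OF assms])

lemma inj_on_gap_rank:
  assumes "bdd_below K" "bdd_above K"
  shows "inj_on (gap_rank K) (gaps K)"
proof (rule inj_onI, rule ccontr)
  fix G G' assume G: "G \<in> gaps K" "G' \<in> gaps K" "gap_rank K G = gap_rank K G'" "G \<noteq> G'"
  then have "fst G \<noteq> fst G'" using gaps_eq_if_fst_eq by blast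
  then have "gap_before G G' \<or> gap_before G' G" unfolding gap_before_def by linarith
  then show False using gap_rank_less[OF assms] G by fastforce
qed

lemma gap_rank_image_before:
  assumes "bdd_below K" "bdd_above K" "G \<in> gaps K"
  shows "gap_rank K ` {G' \<in> gaps K. gap_before G' G} = {..<gap_rank K G}"
proof (rule card_subset_eq)
  show "gap_rank K ` {G' \<in> gaps K. gap_before G' G} \<subseteq> {..<gap_rank K G}"
    using gap_rank_less[OF assms] by auto
  have "inj_on (gap_rank K) {G' \<in> gaps K. gap_before G' G}"
    using inj_on_gap_rank[OF assms(1,2)] by (rule inj_on_subset) auto
  then show "card (gap_rank K ` {G' \<in> gaps K. gap_before G' G}) = card {..<gap_rank K G}"
    by (simp only: card_image card_lessThan gap_rank_def)
qed simp

lemma nat_downclosed_cases: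
  fixes I :: "nat set"
  assumes "\<And>n n'. n \<in> I \<Longrightarrow> n' < n \<Longrightarrow> n' \<in> I"
  shows "I = UNIV \<or> (\<exists>N. I = {..<N})"
proof (cases "I = UNIV")
  case False
  define N where "N = (LEAST n. n \<notin> I)"
  have "N \<notin> I" unfolding N_def using False by (metis LeastI UNIV_eq_I)
  then have "I = {..<N}"
    using assms not_less_Least[of _ "\<lambda>n. n \<notin> I"] unfolding N_def
    by (metis lessThan_iff linorder_neqE_nat subsetI subset_antisym)
  then show ?thesis by blast
qed simp

lemma gap_enum_exists:
  assumes "bdd_below K" "bdd_above K"
  shows "\<exists>e I. gap_enum K e I"
proof -
  define I where "I = gap_rank K ` gaps K"
  define e where "e = inv_into (gaps K) (gap_rank K)"
  have bij: "bij_betw e I (gaps K)"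
    unfolding e_def I_def using inj_on_gap_rank[OF assms] by (simp add: bij_betw_inv_into inj_on_imp_bij_betw)
  have "n' \<in> I" if "n \<in> I" "n' < n" for n n'
  proof -
    obtain G where G: "G \<in> gaps K" "n = gap_rank K G" using \<open>n \<in> I\<close> unfolding I_def by blast
    then show ?thesis
      using gap_rank_image_before[OF assms G(1)] \<open>n' < n\<close> unfolding I_def by blast
  qed
  then have "I = UNIV \<or> (\<exists>N. I = {..<N})" by (rule nat_downclosed_cases)
  moreover have "glen (e j) \<le> glen (e i)" if "i \<in> I" "j \<in> I" "i \<le> j" for i j
  proof -
    have "gap_rank K (e i) = i" "gap_rank K (e j) = j" "e i \<in> gaps K" "e j \<in> gaps K"
      using that unfolding e_def I_def by (auto simp: f_inv_into_f inv_into_into)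
    then show ?thesis
      using gap_rank_less_iff[OF assms, of "e i" "e j"] that by (auto simp: gap_before_def)
  qed
  ultimately show ?thesis unfolding gap_enum_def using bij by blast
qed

definition left_barriers :: "real set \<Rightarrow> real \<times> real \<Rightarrow> real set" where
  "left_barriers K G =
     insert (Inf K) (snd ` {G' \<in> gaps K. G' \<noteq> G \<and> glen G \<le> glen G' \<and> snd G' \<le> fst G})"

definition right_barriers :: "real set \<Rightarrow> real \<times> real \<Rightarrow> real set" where
  "right_barriers K G =
     insert (Sup K) (fst ` {G' \<in> gaps K. G' \<noteq> G \<and> glen G \<le> glen G' \<and> snd G \<le> fst G'})"

definition left_bridge :: "real set \<Rightarrow> real \<times> real \<Rightarrow> real" where
  "left_bridge K G = fst G - Max (left_barriers K G)"

definition right_bridge :: "real set \<Rightarrow> real \<times> real \<Rightarrow> real" where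
  "right_bridge K G = Min (right_barriers K G) - snd G"

definition thickness_gapwise :: "real set \<Rightarrow> ereal" where
  "thickness_gapwise K = (INF G\<in>gaps K. ereal (min (left_bridge K G) (right_bridge K G) / glen G))"

lemma finite_left_barriers:
  assumes "bdd_below K" "bdd_above K" "G \<in> gaps K"
  shows "finite (left_barriers K G)"
proof -
  have "left_barriers K G \<subseteq> insert (Inf K) (snd ` {G' \<in> gaps K. glen G \<le> glen G'})"
    unfolding left_barriers_def by blast
  then show ?thesis
    using finite_gaps_glen_ge[OF assms(1,2) glen_gap_pos[OF assms(3)]] finite_subset by blast
qed

lemma finite_right_barriers:
  assumes "bdd_below K" "bdd_above K" "G \<in> gaps K"
  shows "finite (right_barriers K G)"
proof -
  have "right_barriers K G \<subseteq> insert (Sup K) (fst ` {G' \<in> gaps K. glen G \<le> glen G'})"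
    unfolding right_barriers_def by blast
  then show ?thesis
    using finite_gaps_glen_ge[OF assms(1,2) glen_gap_pos[OF assms(3)]] finite_subset by blast
qed

lemma finite_earlier_right_ends:
  fixes e :: "nat \<Rightarrow> real \<times> real"
  shows "finite ({Inf K} \<union> {snd (e j) | j. j < n \<and> snd (e j) \<le> fst (e n)})"
  by (rule finite_subset[of _ "insert (Inf K) ((\<lambda>j. snd (e j)) ` {..<n})"]) auto

lemma finite_earlier_left_ends:
  fixes e :: "nat \<Rightarrow> real \<times> real"
  shows "finite ({Sup K} \<union> {fst (e j) | j. j < n \<and> snd (e n) \<le> fst (e j)})"
  by (rule finite_subset[of _ "insert (Sup K) ((\<lambda>j. fst (e j)) ` {..<n})"]) auto

lemma left_bridge_len_le:
  assumes "v \<in> {Inf K} \<union> {snd (e j) | j. j < n \<and> snd (e j) \<le> fst (e n)}"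
  shows "left_bridge_len K e n \<le> fst (e n) - v"
  using Max_ge[OF finite_earlier_right_ends assms] unfolding left_bridge_len_def by linarith

lemma right_bridge_len_le:
  assumes "v \<in> {Sup K} \<union> {fst (e j) | j. j < n \<and> snd (e n) \<le> fst (e j)}"
  shows "right_bridge_len K e n \<le> v - snd (e n)"
  using Min_le[OF finite_earlier_left_ends assms] unfolding right_bridge_len_def by linarith

context
  fixes K :: "real set" and e :: "nat \<Rightarrow> real \<times> real" and I :: "nat set"
  assumes bdd: "bdd_below K" "bdd_above K" and enum: "gap_enum K e I"
begin

lemma enum_bij: "bij_betw e I (gaps K)"
  using enum by (simp add: gap_enum_def)

lemma enum_gap: "n \<in> I \<Longrightarrow> e n \<in> gaps K"
  using enum_bij by (auto simp: bij_betw_def)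

lemma enum_mono: "i \<in> I \<Longrightarrow> j \<in> I \<Longrightarrow> i \<le> j \<Longrightarrow> glen (e j) \<le> glen (e i)"
  using enum by (simp add: gap_enum_def)

lemma enum_downclosed: "n \<in> I \<Longrightarrow> j < n \<Longrightarrow> j \<in> I"
  using enum by (auto simp: gap_enum_def)

lemma enum_index:
  assumes "G \<in> gaps K"
  obtains n where "n \<in> I" "e n = G"
  using assms enum_bij unfolding bij_betw_def by (metis imageE)

lemma enum_earlier:
  assumes "n \<in> I" "j < n"
  shows "j \<in> I \<and> e j \<noteq> e n \<and> glen (e n) \<le> glen (e j)"
proof -
  have j: "j \<in> I" using enum_downclosed[OF assms] .
  then have "e j \<noteq> e n" using inj_onD[OF bij_betw_imp_inj_on[OF enum_bij] _ j assms(1)] assms(2) by auto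
  then show ?thesis using j enum_mono[OF j assms(1)] assms(2) by simp
qed

lemma left_bridge_le_left_bridge_len:
  assumes n: "n \<in> I"
  shows "left_bridge K (e n) \<le> left_bridge_len K e n"
proof -
  let ?L = "{Inf K} \<union> {snd (e j) | j. j < n \<and> snd (e j) \<le> fst (e n)}"
  have "?L \<subseteq> left_barriers K (e n)"
    unfolding left_barriers_def using enum_earlier[OF n] enum_gap by blast
  then have "Max ?L \<le> Max (left_barriers K (e n))"
    using finite_left_barriers[OF bdd enum_gap[OF n]] by (intro Max_mono) auto
  then show ?thesis unfolding left_bridge_def left_bridge_len_def by simp
qed

lemma right_bridge_le_right_bridge_len:
  assumes n: "n \<in> I"
  shows "right_bridge K (e n) \<le> right_bridge_len K e n"
proof -
  let ?R = "{Sup K} \<union> {fst (e j) | j. j < n \<and> snd (e n) \<le> fst (e j)}"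
  have "?R \<subseteq> right_barriers K (e n)"
    unfolding right_barriers_def using enum_earlier[OF n] enum_gap by blast
  then have "Min (right_barriers K (e n)) \<le> Min ?R"
    using finite_right_barriers[OF bdd enum_gap[OF n]] by (intro Min_antimono) auto
  then show ?thesis unfolding right_bridge_def right_bridge_len_def by simp
qed

lemma enum_bridge_le_left_bridge:
  assumes G: "G \<in> gaps K"
  shows "\<exists>j\<in>I. glen (e j) = glen G \<and>
           min (left_bridge_len K e j) (right_bridge_len K e j) \<le> left_bridge K G"
proof -
  obtain n where n: "n \<in> I" "e n = G" using enum_index[OF G] .
  have "Max (left_barriers K G) \<in> left_barriers K G"
    using finite_left_barriers[OF bdd G] by (intro Max_in) (auto simp: left_barriers_def)
  then consider "Max (left_barriers K G) = Inf K"
    | G' where "G' \<in> gaps K" "G' \<noteq> G" "glen G \<le> glen G'" "snd G' \<le> fst G"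
        "Max (left_barriers K G) = snd G'"
    unfolding left_barriers_def by blast
  then show ?thesis
  proof cases
    case 1
    have "left_bridge_len K e n \<le> left_bridge K G"
      using left_bridge_len_le[of "Inf K" K e n] n(2) 1 by (simp add: left_bridge_def)
    then show ?thesis using n by (intro bexI[of _ n]) auto
  next
    case 2
    obtain j where j: "j \<in> I" "e j = G'" using enum_index[OF 2(1)] .
    consider "j < n" | "n < j" using 2(2) j n by fastforce
    then show ?thesis
    proof cases
      case 1
      have "snd G' \<in> {Inf K} \<union> {snd (e i) | i. i < n \<and> snd (e i) \<le> fst (e n)}"
        using 1 j(2) n(2) 2(4) by blast
      from left_bridge_len_le[OF this] have "left_bridge_len K e n \<le> left_bridge K G"
        using n(2) 2(5) by (simp add: left_bridge_def)
      then show ?thesis using n by (intro bexI[of _ n]) auto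
    next
      case later: 2
      have "glen (e j) \<le> glen G" using enum_mono[OF n(1) j(1)] later n(2) by simp
      then have "glen (e j) = glen G" using 2(3) j(2) by simp
      moreover have "fst G \<in> {Sup K} \<union> {fst (e i) | i. i < j \<and> snd (e j) \<le> fst (e i)}"
        using later j(2) n(2) 2(4) by blast
      from right_bridge_len_le[OF this] have "right_bridge_len K e j \<le> left_bridge K G"
        using j(2) 2(5) by (simp add: left_bridge_def)
      ultimately show ?thesis using j by (intro bexI[of _ j]) auto
    qed
  qed
qed

lemma enum_bridge_le_right_bridge:
  assumes G: "G \<in> gaps K"
  shows "\<exists>j\<in>I. glen (e j) = glen G \<and>
           min (left_bridge_len K e j) (right_bridge_len K e j) \<le> right_bridge K G"
proof -
  obtain n where n: "n \<in> I" "e n = G" using enum_index[OF G] .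
  have "Min (right_barriers K G) \<in> right_barriers K G"
    using finite_right_barriers[OF bdd G] by (intro Min_in) (auto simp: right_barriers_def)
  then consider "Min (right_barriers K G) = Sup K"
    | G' where "G' \<in> gaps K" "G' \<noteq> G" "glen G \<le> glen G'" "snd G \<le> fst G'"
        "Min (right_barriers K G) = fst G'"
    unfolding right_barriers_def by blast
  then show ?thesis
  proof cases
    case 1
    have "right_bridge_len K e n \<le> right_bridge K G"
      using right_bridge_len_le[of "Sup K" K e n] n(2) 1 by (simp add: right_bridge_def)
    then show ?thesis using n by (intro bexI[of _ n]) auto
  next
    case 2
    obtain j where j: "j \<in> I" "e j = G'" using enum_index[OF 2(1)] .
    consider "j < n" | "n < j" using 2(2) j n by fastforce
    then show ?thesis
    proof cases
      case 1
      have "fst G' \<in> {Sup K} \<union> {fst (e i) | i. i < n \<and> snd (e n) \<le> fst (e i)}"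
        using 1 j(2) n(2) 2(4) by blast
      from right_bridge_len_le[OF this] have "right_bridge_len K e n \<le> right_bridge K G"
        using n(2) 2(5) by (simp add: right_bridge_def)
      then show ?thesis using n by (intro bexI[of _ n]) auto
    next
      case later: 2
      have "glen (e j) \<le> glen G" using enum_mono[OF n(1) j(1)] later n(2) by simp
      then have "glen (e j) = glen G" using 2(3) j(2) by simp
      moreover have "snd G \<in> {Inf K} \<union> {snd (e i) | i. i < j \<and> snd (e i) \<le> fst (e j)}"
        using later j(2) n(2) 2(4) by blast
      from left_bridge_len_le[OF this] have "left_bridge_len K e j \<le> right_bridge K G"
        using j(2) 2(5) by (simp add: right_bridge_def)
      ultimately show ?thesis using j by (intro bexI[of _ j]) auto
    qed
  qed
qed

lemma INF_enum_eq_thickness_gapwise: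
  "(INF n\<in>I. ereal (min (left_bridge_len K e n) (right_bridge_len K e n) / glen (e n)))
     = thickness_gapwise K"
proof (rule antisym)
  show "(INF n\<in>I. ereal (min (left_bridge_len K e n) (right_bridge_len K e n) / glen (e n)))
          \<le> thickness_gapwise K"
    unfolding thickness_gapwise_def
  proof (rule INF_greatest)
    fix G assume G: "G \<in> gaps K"
    have "min (left_bridge K G) (right_bridge K G) \<in> {left_bridge K G, right_bridge K G}"
      by (simp add: min_def)
    then obtain j where "j \<in> I" "glen (e j) = glen G"
        "min (left_bridge_len K e j) (right_bridge_len K e j) \<le> min (left_bridge K G) (right_bridge K G)"
      using enum_bridge_le_left_bridge[OF G] enum_bridge_le_right_bridge[OF G] by auto
    then show "(INF n\<in>I. ereal (min (left_bridge_len K e n) (right_bridge_len K e n) / glen (e n)))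
                 \<le> ereal (min (left_bridge K G) (right_bridge K G) / glen G)"
      using glen_gap_pos[OF G] by (intro INF_lower2[of j]) (auto intro: divide_right_mono)
  qed
  show "thickness_gapwise K
          \<le> (INF n\<in>I. ereal (min (left_bridge_len K e n) (right_bridge_len K e n) / glen (e n)))"
    unfolding thickness_gapwise_def
  proof (rule INF_greatest)
    fix n assume n: "n \<in> I"
    have "min (left_bridge K (e n)) (right_bridge K (e n)) \<le>
          min (left_bridge_len K e n) (right_bridge_len K e n)"
      using left_bridge_le_left_bridge_len[OF n] right_bridge_le_right_bridge_len[OF n] by linarith
    then show "(INF G\<in>gaps K. ereal (min (left_bridge K G) (right_bridge K G) / glen G))
                 \<le> ereal (min (left_bridge_len K e n) (right_bridge_len K e n) / glen (e n))"
      using enum_gap[OF n] glen_gap_pos[OF enum_gap[OF n]]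
      by (intro INF_lower2[of "e n"]) (auto intro: divide_right_mono)
  qed
qed

end

lemma thickness_eq_thickness_gapwise:
  assumes "bdd_below K" "bdd_above K"
  shows "thickness K = thickness_gapwise K"
proof -
  obtain e I where "gap_enum K e I" using gap_enum_exists[OF assms] by blast
  then have "\<exists>t e I. gap_enum K e I \<and>
      t = (INF n\<in>I. ereal (min (left_bridge_len K e n) (right_bridge_len K e n) / glen (e n)))"
    by blast
  then show ?thesis
    unfolding thickness_def
    by (rule someI2_ex) (use INF_enum_eq_thickness_gapwise[OF assms] in blast)
qed

lemma gaps_restrict: "gaps (K \<inter> {a..b}) = {G \<in> gaps K. a \<le> fst G \<and> snd G \<le> b}"
  unfolding gaps_def by auto

lemma left_bridge_restrict:
  assumes bdd: "bdd_below K" "bdd_above K" and "a \<in> K"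
    and G: "G \<in> gaps (K \<inter> {a..b})" and a: "a \<in> left_barriers K G"
  shows "left_bridge (K \<inter> {a..b}) G = left_bridge K G"
proof -
  let ?D = "K \<inter> {a..b}"
  have GK: "G \<in> gaps K" "a \<le> fst G" "snd G \<le> b" using G gaps_restrict by auto
  then have "a \<in> ?D" using \<open>a \<in> K\<close> gapsD[OF GK(1)] by auto
  then have inf: "Inf ?D = a" by (intro cInf_eq_minimum) auto
  have finD: "finite (left_barriers ?D G)"
    using bdd G by (intro finite_left_barriers) (auto intro: bdd_below_mono bdd_above_mono)
  have finK: "finite (left_barriers K G)" by (rule finite_left_barriers[OF bdd GK(1)])
  have aD: "a \<in> left_barriers ?D G" unfolding left_barriers_def inf by simp
  have "left_barriers ?D G \<subseteq> left_barriers K G"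
    using a unfolding left_barriers_def inf gaps_restrict by blast
  then have "Max (left_barriers ?D G) \<le> Max (left_barriers K G)"
    using aD finK by (intro Max_mono) auto
  moreover have "x \<le> Max (left_barriers ?D G)" if x: "x \<in> left_barriers K G" for x
  proof -
    have "a \<le> Max (left_barriers ?D G)" using aD finD by simp
    moreover have "x \<in> left_barriers ?D G \<or> x \<le> a"
    proof (cases "x = Inf K")
      case False
      then obtain G' where G': "G' \<in> gaps K" "G' \<noteq> G" "glen G \<le> glen G'" "snd G' \<le> fst G"
        "x = snd G'" using x unfolding left_barriers_def by blast
      show ?thesis
      proof (cases "a \<le> fst G'")
        case True
        then have "G' \<in> gaps ?D" using G' GK gapsD[OF GK(1)] gaps_restrict by auto
        then show ?thesis unfolding left_barriers_def using G' by blast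
      next
        case False
        then have "snd G' \<le> a" using gapsD[OF G'(1)] \<open>a \<in> K\<close> by force
        then show ?thesis using G' by simp
      qed
    qed (use \<open>a \<in> K\<close> bdd in \<open>simp add: cInf_lower\<close>)
    ultimately show ?thesis using finD Max_ge order_trans by blast
  qed
  then have "Max (left_barriers K G) \<le> Max (left_barriers ?D G)"
    using finK by (simp add: left_barriers_def)
  ultimately show ?thesis unfolding left_bridge_def by simp
qed

lemma right_bridge_restrict:
  assumes bdd: "bdd_below K" "bdd_above K" and "b \<in> K"
    and G: "G \<in> gaps (K \<inter> {a..b})" and b: "b \<in> right_barriers K G"
  shows "right_bridge (K \<inter> {a..b}) G = right_bridge K G"
proof -
  let ?D = "K \<inter> {a..b}"
  have GK: "G \<in> gaps K" "a \<le> fst G" "snd G \<le> b" using G gaps_restrict by auto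
  then have "b \<in> ?D" using \<open>b \<in> K\<close> gapsD[OF GK(1)] by auto
  then have sup: "Sup ?D = b" by (intro cSup_eq_maximum) auto
  have finD: "finite (right_barriers ?D G)"
    using bdd G by (intro finite_right_barriers) (auto intro: bdd_below_mono bdd_above_mono)
  have finK: "finite (right_barriers K G)" by (rule finite_right_barriers[OF bdd GK(1)])
  have bD: "b \<in> right_barriers ?D G" unfolding right_barriers_def sup by simp
  have "right_barriers ?D G \<subseteq> right_barriers K G"
    using b unfolding right_barriers_def sup gaps_restrict by blast
  then have "Min (right_barriers K G) \<le> Min (right_barriers ?D G)"
    using bD finK by (intro Min_antimono) auto
  moreover have "Min (right_barriers ?D G) \<le> x" if x: "x \<in> right_barriers K G" for x
  proof -
    have "Min (right_barriers ?D G) \<le> b" using bD finD by simp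
    moreover have "x \<in> right_barriers ?D G \<or> b \<le> x"
    proof (cases "x = Sup K")
      case False
      then obtain G' where G': "G' \<in> gaps K" "G' \<noteq> G" "glen G \<le> glen G'" "snd G \<le> fst G'"
        "x = fst G'" using x unfolding right_barriers_def by blast
      show ?thesis
      proof (cases "snd G' \<le> b")
        case True
        then have "G' \<in> gaps ?D" using G' GK gapsD[OF GK(1)] gaps_restrict by auto
        then show ?thesis unfolding right_barriers_def using G' by blast
      next
        case False
        then have "b \<le> fst G'" using gapsD[OF G'(1)] \<open>b \<in> K\<close> by force
        then show ?thesis using G' by simp
      qed
    qed (use \<open>b \<in> K\<close> bdd in \<open>simp add: cSup_upper\<close>)
    ultimately show ?thesis using finD Min_le order_trans by blast
  qed
  then have "Min (right_barriers ?D G) \<le> Min (right_barriers K G)"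
    using finK by (simp add: right_barriers_def)
  ultimately show ?thesis unfolding right_bridge_def by simp
qed

lemma thickness_gapwise_le_restrict:
  assumes "bdd_below K" "bdd_above K" "a \<in> K" "b \<in> K"
    and barriers: "\<And>G. G \<in> gaps (K \<inter> {a..b}) \<Longrightarrow> a \<in> left_barriers K G \<and> b \<in> right_barriers K G"
  shows "thickness_gapwise K \<le> thickness_gapwise (K \<inter> {a..b})"
  unfolding thickness_gapwise_def
proof (rule INF_superset_mono)
  show "gaps (K \<inter> {a..b}) \<subseteq> gaps K" unfolding gaps_restrict by blast
qed (simp add: left_bridge_restrict right_bridge_restrict assms)

lemma gaps_strict_mono_image:
  fixes f :: "real \<Rightarrow> real"
  assumes "strict_mono f"
  shows "gaps (f ` K) = map_prod f f ` gaps K"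
proof -
  have less: "f u < f v \<longleftrightarrow> u < v" for u v
    using assms by (simp add: strict_mono_less)
  have "{f u<..<f v} \<inter> f ` K = f ` ({u<..<v} \<inter> K)" for u v
    by (auto simp: less)
  then have empty: "{f u<..<f v} \<inter> f ` K = {} \<longleftrightarrow> {u<..<v} \<inter> K = {}" for u v
    by simp
  show ?thesis
  proof (intro set_eqI iffI)
    fix H assume "H \<in> gaps (f ` K)"
    then obtain u v where "H = (f u, f v)" "u \<in> K" "v \<in> K" "f u < f v" "{f u<..<f v} \<inter> f ` K = {}"
      unfolding gaps_def by blast
    then show "H \<in> map_prod f f ` gaps K"
      unfolding empty less by (auto simp: gaps_def image_iff)
  next
    fix H assume "H \<in> map_prod f f ` gaps K"
    then obtain u v where "H = (f u, f v)" "(u, v) \<in> gaps K" by auto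
    then show "H \<in> gaps (f ` K)" unfolding gaps_def using empty less by auto
  qed
qed

lemma left_bridge_affine:
  fixes c d :: real
  defines "f \<equiv> \<lambda>x. c * x + d"
  assumes c: "0 < c" and bdd: "bdd_below K" "bdd_above K" and G: "G \<in> gaps K"
  shows "left_bridge (f ` K) (map_prod f f G) = c * left_bridge K G"
proof -
  have "strict_mono f" using c by (auto simp: f_def strict_mono_def)
  then have mono: "mono f" by (rule strict_mono_mono)
  have le: "f u \<le> f v \<longleftrightarrow> u \<le> v" for u v using c by (simp add: f_def)
  have glen: "glen (map_prod f f G') = c * glen G'" for G'
    by (simp add: glen_def f_def algebra_simps)
  have inj: "map_prod f f G' = map_prod f f G \<longleftrightarrow> G' = G" for G'
    using c by (cases G'; cases G) (auto simp: f_def)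
  have "continuous (at_right (Inf K)) f" unfolding f_def by (intro continuous_intros)
  moreover have "K \<noteq> {}" using G by (auto simp: gaps_def)
  ultimately have "Inf (f ` K) = f (Inf K)" using continuous_at_Inf_mono[OF mono] bdd by simp
  moreover have "{G' \<in> gaps (f ` K). G' \<noteq> map_prod f f G \<and> glen (map_prod f f G) \<le> glen G'
                     \<and> snd G' \<le> fst (map_prod f f G)}
      = map_prod f f ` {G' \<in> gaps K. G' \<noteq> G \<and> glen G \<le> glen G' \<and> snd G' \<le> fst G}"
  proof -
    have "(map_prod f f G' \<noteq> map_prod f f G \<and> glen (map_prod f f G) \<le> glen (map_prod f f G')
            \<and> snd (map_prod f f G') \<le> fst (map_prod f f G))
          \<longleftrightarrow> (G' \<noteq> G \<and> glen G \<le> glen G' \<and> snd G' \<le> fst G)" for G'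
      using c by (simp add: glen inj le)
    then show ?thesis unfolding gaps_strict_mono_image[OF \<open>strict_mono f\<close>] Compr_image_eq
      by (simp only:)
  qed
  ultimately have "left_barriers (f ` K) (map_prod f f G) = f ` left_barriers K G"
    unfolding left_barriers_def by (simp add: image_image)
  then have "Max (left_barriers (f ` K) (map_prod f f G)) = f (Max (left_barriers K G))"
    using mono_Max_commute[OF mono finite_left_barriers[OF bdd G]] by (simp add: left_barriers_def)
  then show ?thesis unfolding left_bridge_def by (simp add: f_def algebra_simps)
qed

lemma right_bridge_affine:
  fixes c d :: real
  defines "f \<equiv> \<lambda>x. c * x + d"
  assumes c: "0 < c" and bdd: "bdd_below K" "bdd_above K" and G: "G \<in> gaps K"
  shows "right_bridge (f ` K) (map_prod f f G) = c * right_bridge K G"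
proof -
  have "strict_mono f" using c by (auto simp: f_def strict_mono_def)
  then have mono: "mono f" by (rule strict_mono_mono)
  have le: "f u \<le> f v \<longleftrightarrow> u \<le> v" for u v using c by (simp add: f_def)
  have glen: "glen (map_prod f f G') = c * glen G'" for G'
    by (simp add: glen_def f_def algebra_simps)
  have inj: "map_prod f f G' = map_prod f f G \<longleftrightarrow> G' = G" for G'
    using c by (cases G'; cases G) (auto simp: f_def)
  have "continuous (at_left (Sup K)) f" unfolding f_def by (intro continuous_intros)
  moreover have "K \<noteq> {}" using G by (auto simp: gaps_def)
  ultimately have "Sup (f ` K) = f (Sup K)" using continuous_at_Sup_mono[OF mono] bdd by simp
  moreover have "{G' \<in> gaps (f ` K). G' \<noteq> map_prod f f G \<and> glen (map_prod f f G) \<le> glen G'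
                     \<and> snd (map_prod f f G) \<le> fst G'}
      = map_prod f f ` {G' \<in> gaps K. G' \<noteq> G \<and> glen G \<le> glen G' \<and> snd G \<le> fst G'}"
  proof -
    have "(map_prod f f G' \<noteq> map_prod f f G \<and> glen (map_prod f f G) \<le> glen (map_prod f f G')
            \<and> snd (map_prod f f G) \<le> fst (map_prod f f G'))
          \<longleftrightarrow> (G' \<noteq> G \<and> glen G \<le> glen G' \<and> snd G \<le> fst G')" for G'
      using c by (simp add: glen inj le)
    then show ?thesis unfolding gaps_strict_mono_image[OF \<open>strict_mono f\<close>] Compr_image_eq
      by (simp only:)
  qed
  ultimately have "right_barriers (f ` K) (map_prod f f G) = f ` right_barriers K G"
    unfolding right_barriers_def by (simp add: image_image)
  then have "Min (right_barriers (f ` K) (map_prod f f G)) = f (Min (right_barriers K G))"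
    using mono_Min_commute[OF mono finite_right_barriers[OF bdd G]] by (simp add: right_barriers_def)
  then show ?thesis unfolding right_bridge_def by (simp add: f_def algebra_simps)
qed

lemma thickness_gapwise_affine:
  fixes c d :: real
  assumes c: "0 < c" and bdd: "bdd_below K" "bdd_above K"
  shows "thickness_gapwise ((\<lambda>x. c * x + d) ` K) = thickness_gapwise K"
proof -
  define f where "f x = c * x + d" for x
  have "strict_mono f" using c by (auto simp: f_def strict_mono_def)
  have "min (left_bridge (f ` K) (map_prod f f G)) (right_bridge (f ` K) (map_prod f f G))
          / glen (map_prod f f G)
        = min (left_bridge K G) (right_bridge K G) / glen G" if G: "G \<in> gaps K" for G
  proof -
    have "left_bridge (f ` K) (map_prod f f G) = c * left_bridge K G"
      unfolding f_def[abs_def] by (rule left_bridge_affine[OF c bdd G])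
    moreover have "right_bridge (f ` K) (map_prod f f G) = c * right_bridge K G"
      unfolding f_def[abs_def] by (rule right_bridge_affine[OF c bdd G])
    moreover have "glen (map_prod f f G) = c * glen G" by (simp add: glen_def f_def algebra_simps)
    moreover have "min (c * left_bridge K G) (c * right_bridge K G) = c * min (left_bridge K G) (right_bridge K G)"
      using c by (simp add: min_mult_distrib_left)
    ultimately show ?thesis using c by simp
  qed
  then have "thickness_gapwise (f ` K) = thickness_gapwise K"
    unfolding thickness_gapwise_def gaps_strict_mono_image[OF \<open>strict_mono f\<close>] image_image
    by simp
  then show ?thesis unfolding f_def[abs_def] .
qed

lemma thickness_le_affine_restrict:
  fixes a b c d :: real
  assumes bdd: "bdd_below K" "bdd_above K" and "a \<in> K" "b \<in> K" and c: "0 < c"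
    and barriers: "\<And>G. G \<in> gaps (K \<inter> {a..b}) \<Longrightarrow> a \<in> left_barriers K G \<and> b \<in> right_barriers K G"
  shows "thickness K \<le> thickness ((\<lambda>x. c * x + d) ` (K \<inter> {a..b}))"
proof -
  have bdd_restr: "bdd_below (K \<inter> {a..b})" "bdd_above (K \<inter> {a..b})" by auto
  then have "bdd_below ((\<lambda>x. c * x + d) ` (K \<inter> {a..b}))" "bdd_above ((\<lambda>x. c * x + d) ` (K \<inter> {a..b}))"
    using c by (auto intro!: bdd_below_image_mono bdd_above_image_mono simp: mono_def)
  then have "thickness ((\<lambda>x. c * x + d) ` (K \<inter> {a..b})) = thickness_gapwise (K \<inter> {a..b})"
    by (simp add: thickness_eq_thickness_gapwise thickness_gapwise_affine[OF c bdd_restr])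
  moreover have "thickness_gapwise K \<le> thickness_gapwise (K \<inter> {a..b})"
    by (rule thickness_gapwise_le_restrict) (use assms in auto)
  ultimately show ?thesis by (simp add: thickness_eq_thickness_gapwise[OF bdd])
qed

section \<open>Binary sequences and their values\<close>

definition binary_seq :: "(nat \<Rightarrow> nat) \<Rightarrow> bool" where
  "binary_seq e \<longleftrightarrow> (\<forall>n. e n \<in> {0, 1})"

definition prefix_run :: "nat \<Rightarrow> nat \<Rightarrow> (nat \<Rightarrow> nat) \<Rightarrow> nat \<Rightarrow> nat" where
  "prefix_run a r e = (\<lambda>n. if n < r then a else e (n - r))"

definition flip :: "(nat \<Rightarrow> nat) \<Rightarrow> nat \<Rightarrow> nat" where
  "flip e = (\<lambda>n. 1 - e n)"

lemma binary_seqD: "binary_seq e \<Longrightarrow> e n \<in> {0, 1}"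
  by (simp add: binary_seq_def)

lemma binary_seq_le_1: "binary_seq e \<Longrightarrow> e n \<le> 1"
  using binary_seqD[of e n] by auto

lemma binary_seq_flip: "binary_seq e \<Longrightarrow> binary_seq (flip e)"
  unfolding binary_seq_def flip_def by auto

lemma flip_flip:
  assumes "binary_seq e"
  shows "flip (flip e) = e"
proof
  fix n show "flip (flip e) n = e n" using binary_seqD[OF assms, of n] by (auto simp: flip_def)
qed

lemma flip_case_nat: "flip (case_nat a e) = case_nat (1 - a) (flip e)"
  unfolding flip_def by (simp add: fun_eq_iff split: nat.split)

lemma all_nat_split: "(\<forall>n. P n) \<longleftrightarrow> P 0 \<and> (\<forall>n. P (Suc n))"
  by (metis not0_implies_Suc)

lemma binary_seq_case_nat: "binary_seq (case_nat a e) \<longleftrightarrow> a \<in> {0, 1} \<and> binary_seq e"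
  unfolding binary_seq_def by (subst all_nat_split) simp

lemma binary_seq_prefix_run: "a \<in> {0, 1} \<Longrightarrow> binary_seq e \<Longrightarrow> binary_seq (prefix_run a r e)"
  unfolding binary_seq_def prefix_run_def by auto

lemma prefix_run_Suc: "prefix_run a (Suc r) e = case_nat a (prefix_run a r e)"
  unfolding prefix_run_def by (auto simp: fun_eq_iff split: nat.split)

lemma prefix_run_0 [simp]: "prefix_run a 0 e = e"
  unfolding prefix_run_def by simp

lemma occurs_in_Cons_replicate:
  "occurs_in (a # replicate j b) e \<longleftrightarrow> (\<exists>n. e n = a \<and> (\<forall>i<j. e (Suc (n + i)) = b))"
proof -
  have "(\<forall>i<Suc j. e (n + i) = (a # replicate j b) ! i) \<longleftrightarrow> e n = a \<and> (\<forall>i<j. e (Suc (n + i)) = b)"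
    for n by (simp add: All_less_Suc2)
  then show ?thesis unfolding occurs_in_def by simp
qed

lemma mem_S_set_iff:
  "e \<in> S_set j \<longleftrightarrow> binary_seq e \<and> (\<forall>n. \<not> (\<forall>i<j. e (Suc (n + i)) = 1 - e n))"
proof -
  have S: "e \<in> S_set j \<longleftrightarrow> binary_seq e \<and>
      (\<forall>n. \<not> ((e n = 0 \<and> (\<forall>i<j. e (Suc (n + i)) = 1)) \<or> (e n = 1 \<and> (\<forall>i<j. e (Suc (n + i)) = 0))))"
    unfolding S_set_def avoids_def occurs_in_Cons_replicate binary_seq_def by blast
  have "(e n = 0 \<and> (\<forall>i<j. e (Suc (n + i)) = 1)) \<or> (e n = 1 \<and> (\<forall>i<j. e (Suc (n + i)) = 0))
        \<longleftrightarrow> (\<forall>i<j. e (Suc (n + i)) = 1 - e n)" if "binary_seq e" for n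
  proof -
    have "e n \<in> {0, 1}" using that by (simp add: binary_seq_def)
    then show ?thesis by auto
  qed
  then show ?thesis unfolding S by blast
qed

lemma S_set_binary_seq: "e \<in> S_set j \<Longrightarrow> binary_seq e"
  by (simp add: mem_S_set_iff)

lemma case_nat_mem_S_set_iff:
  assumes "a \<in> {0, 1}"
  shows "case_nat a e \<in> S_set j \<longleftrightarrow> e \<in> S_set j \<and> \<not> (\<forall>i<j. e i = 1 - a)"
  unfolding mem_S_set_iff binary_seq_case_nat
  by (subst all_nat_split) (use assms in auto)

lemma shift_mem_S_set:
  assumes "e \<in> S_set j"
  shows "(\<lambda>n. e (n + r)) \<in> S_set j"
proof -
  have "binary_seq e" "\<not> (\<forall>i<j. e (Suc (n + r + i)) = 1 - e (n + r))" for n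
    using assms unfolding mem_S_set_iff by blast+
  then show ?thesis unfolding mem_S_set_iff binary_seq_def by (simp add: ac_simps)
qed

lemma flip_mem_S_set:
  assumes "e \<in> S_set j"
  shows "flip e \<in> S_set j"
proof -
  have bin: "binary_seq e" using assms by (simp add: mem_S_set_iff)
  have "flip e m = 1 - flip e n \<longleftrightarrow> e m = 1 - e n" for m n
  proof -
    have "e m \<in> {0, 1}" "e n \<in> {0, 1}" using bin by (auto simp: binary_seq_def)
    then show ?thesis by (auto simp: flip_def)
  qed
  then show ?thesis using assms binary_seq_flip[OF bin] by (simp add: mem_S_set_iff)
qed

lemma zeros_mem_S_set: "0 < j \<Longrightarrow> (\<lambda>_. 0) \<in> S_set j"
  unfolding mem_S_set_iff binary_seq_def by auto

definition S_after :: "nat \<Rightarrow> nat \<Rightarrow> (nat \<Rightarrow> nat) set" where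
  "S_after j a = {e \<in> S_set j. e 0 = 1 - a \<and> case_nat a e \<in> S_set j}"

lemma S_after_binary_seq: "e \<in> S_after j a \<Longrightarrow> binary_seq e"
  unfolding S_after_def using S_set_binary_seq by blast

lemma flip_mem_S_after:
  assumes "a \<in> {0, 1}" "e \<in> S_after j a"
  shows "flip e \<in> S_after j (1 - a)"
proof -
  have "flip e 0 = 1 - (1 - a)" using assms by (auto simp: S_after_def flip_def)
  moreover have "case_nat (1 - a) (flip e) \<in> S_set j"
    using flip_mem_S_set[of "case_nat a e"] assms(2) by (simp add: S_after_def flip_case_nat)
  ultimately show ?thesis using assms(2) flip_mem_S_set by (simp add: S_after_def)
qed

lemma prefix_run_mem_S_set:
  assumes "a \<in> {0, 1}" "\<rho> \<in> S_after j a"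
  shows "prefix_run a r \<rho> \<in> S_set j"
proof (induction r)
  case 0
  then show ?case using assms(2) by (simp add: S_after_def)
next
  case (Suc r)
  have "\<not> (\<forall>i<j. prefix_run a r \<rho> i = 1 - a)"
  proof (cases r)
    case 0
    then show ?thesis using assms case_nat_mem_S_set_iff[of a \<rho> j] by (simp add: S_after_def)
  next
    case (Suc r')
    then have "prefix_run a r \<rho> 0 = a" by (simp add: prefix_run_def)
    moreover have "0 < j" using assms case_nat_mem_S_set_iff[of a \<rho> j] by (auto simp: S_after_def)
    ultimately show ?thesis using assms(1) by force
  qed
  then show ?case using Suc.IH case_nat_mem_S_set_iff[OF assms(1)] by (simp add: prefix_run_Suc)
qed

lemma prefix_run_mem_S_after:
  assumes "a \<in> {0, 1}" "\<rho> \<in> S_after j a" "1 \<le> r" "r < j"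
  shows "prefix_run a r \<rho> \<in> S_after j (1 - a)"
proof -
  have "prefix_run a r \<rho> r = 1 - a" using assms(2) by (simp add: prefix_run_def S_after_def)
  then have "\<not> (\<forall>i<j. prefix_run a r \<rho> i = a)" using assms(1,4) by force
  then have "case_nat (1 - a) (prefix_run a r \<rho>) \<in> S_set j"
    using assms(1) case_nat_mem_S_set_iff[of "1 - a"] prefix_run_mem_S_set[OF assms(1,2)] by auto
  then show ?thesis
    using assms prefix_run_mem_S_set[OF assms(1,2)] by (auto simp: S_after_def prefix_run_def)
qed

lemma S_set_first_run:
  assumes e: "e \<in> S_set j" "e 0 = b" "e n \<noteq> b" and b: "b \<in> {0, 1}"
  obtains r \<rho> where "1 \<le> r" "r \<le> n" "\<rho> \<in> S_after j b" "e = prefix_run b r \<rho>"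
proof -
  define r where "r = (LEAST n. e n \<noteq> b)"
  have er: "e r \<noteq> b" unfolding r_def using e(3) by (rule LeastI)
  have "r \<le> n" unfolding r_def using e(3) by (rule Least_le)
  have before: "e i = b" if "i < r" for i using not_less_Least[OF that[unfolded r_def]] by simp
  have "1 \<le> r" using er e(2) by (cases r) auto
  define \<rho> where "\<rho> = (\<lambda>i. e (i + r))"
  have "e = prefix_run b r \<rho>" unfolding \<rho>_def prefix_run_def using before by auto
  moreover have "\<rho> 0 = 1 - b"
  proof -
    have "e r \<in> {0, 1}" using S_set_binary_seq[OF e(1)] by (simp add: binary_seq_def)
    then show ?thesis using er b by (auto simp: \<rho>_def)
  qed
  moreover have "case_nat b \<rho> = (\<lambda>i. e (i + (r - 1)))"
    unfolding \<rho>_def using before \<open>1 \<le> r\<close> by (auto simp: fun_eq_iff split: nat.split)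
  then have "case_nat b \<rho> \<in> S_set j" using shift_mem_S_set[OF e(1)] by simp
  moreover have "\<rho> \<in> S_set j" unfolding \<rho>_def by (rule shift_mem_S_set[OF e(1)])
  ultimately show ?thesis using that \<open>1 \<le> r\<close> \<open>r \<le> n\<close> by (simp add: S_after_def)
qed

lemma S_after_first_run:
  assumes a: "a \<in> {0, 1}" and e: "e \<in> S_after j a"
  obtains r \<rho> where "1 \<le> r" "r < j" "\<rho> \<in> S_after j (1 - a)" "e = prefix_run (1 - a) r \<rho>"
proof -
  have eS: "e \<in> S_set j" "e 0 = 1 - a" "case_nat a e \<in> S_set j" using e by (auto simp: S_after_def)
  then obtain n where n: "n < j" "e n \<noteq> 1 - a" using case_nat_mem_S_set_iff[OF a] by auto
  moreover have "1 - a \<in> {0, 1}" using a by auto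
  ultimately obtain r \<rho> where "1 \<le> r" "r \<le> n" "\<rho> \<in> S_after j (1 - a)" "e = prefix_run (1 - a) r \<rho>"
    using S_set_first_run[OF eS(1,2)] by blast
  then show ?thesis using that n(1) by auto
qed

lemma eventually_periodic_Nil_Cons_replicate:
  "eventually_periodic [] (b # replicate r c) n = (if n mod Suc r = 0 then b else c)"
proof -
  have "n mod Suc r < Suc r" by simp
  then show ?thesis by (cases "n mod Suc r") (simp_all add: eventually_periodic_def)
qed

lemma eventually_periodic_Nil_Cons_replicate_unfold:
  "eventually_periodic [] (b # replicate r c)
     = case_nat b (prefix_run c r (eventually_periodic [] (b # replicate r c)))"
proof
  fix n
  show "eventually_periodic [] (b # replicate r c) n
          = case_nat b (prefix_run c r (eventually_periodic [] (b # replicate r c))) n"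
  proof (cases n)
    case (Suc m)
    show ?thesis
    proof (cases "m < r")
      case False
      then have "Suc m = (m - r) + Suc r" by simp
      then have "Suc m mod Suc r = (m - r) mod Suc r" by (metis mod_add_self2)
      then show ?thesis using Suc False by (simp add: eventually_periodic_Nil_Cons_replicate prefix_run_def)
    qed (use Suc in \<open>simp add: eventually_periodic_Nil_Cons_replicate prefix_run_def\<close>)
  qed (simp add: eventually_periodic_Nil_Cons_replicate)
qed

lemma binary_seq_periodic:
  assumes "b \<in> {0, 1}" "c \<in> {0, 1}"
  shows "binary_seq (eventually_periodic [] (b # replicate r c))"
  unfolding binary_seq_def eventually_periodic_Nil_Cons_replicate using assms by simp

lemma eventually_periodic_replicate:
  "eventually_periodic (replicate n a) w = prefix_run a n (eventually_periodic [] w)"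
  by (simp add: fun_eq_iff eventually_periodic_def prefix_run_def)

lemma flip_eventually_periodic:
  assumes "w \<noteq> []"
  shows "flip (eventually_periodic u w) = eventually_periodic (map ((-) 1) u) (map ((-) 1) w)"
  using assms by (simp add: fun_eq_iff flip_def eventually_periodic_def)

lemma periodic_one_zeros_mem_S_after:
  assumes s: "1 \<le> s"
  shows "eventually_periodic [] (1 # replicate s 0) \<in> S_after (Suc s) 0"
proof -
  define p where "p = eventually_periodic [] (1 # replicate s 0)"
  have p_nth: "p n = (if n mod Suc s = 0 then 1 else 0)" for n
    unfolding p_def by (rule eventually_periodic_Nil_Cons_replicate)
  have "\<not> (\<forall>i<Suc s. p (Suc (n + i)) = 1 - p n)" for n
  proof (cases "n mod Suc s = 0")
    case True
    then have "Suc (n + s) mod Suc s = 0" by (metis add_Suc_right mod_add_self2)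
    then show ?thesis using True by (auto simp: p_nth)
  next
    case False
    have "Suc n mod Suc s \<noteq> 0 \<or> Suc (Suc n) mod Suc s \<noteq> 0"
    proof (rule ccontr)
      assume "\<not> ?thesis"
      then have "Suc s dvd Suc n" "Suc s dvd Suc (Suc n)" by (auto simp: mod_eq_0_iff_dvd)
      then have "Suc s dvd 1" using dvd_diff_nat[of "Suc s" "Suc (Suc n)" "Suc n"] by simp
      then show False using s by simp
    qed
    then consider "p (Suc (n + 0)) \<noteq> 1 - p n" | "p (Suc (n + 1)) \<noteq> 1 - p n"
      using False by (auto simp: p_nth)
    then show ?thesis using s by cases (blast, metis Suc_le_mono Suc_le_lessD)
  qed
  then have "p \<in> S_set (Suc s)" by (simp add: mem_S_set_iff binary_seq_def p_nth)
  moreover have "\<not> (\<forall>i<Suc s. p i = 1 - 0)"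
  proof -
    have "p 1 = 0" "1 < Suc s" using s by (simp_all add: p_nth)
    then show ?thesis by auto
  qed
  moreover have "p 0 = 1" by (simp add: p_nth)
  ultimately show ?thesis unfolding p_def[symmetric] by (simp add: S_after_def case_nat_mem_S_set_iff)
qed

context
  fixes q :: real
  assumes q: "1 < q"
begin

lemma sums_inverse_powers: "(\<lambda>j. 1 / q ^ Suc j) sums (1 / (q - 1))"
proof -
  have "(\<lambda>j. (1 / q) * (1 / q) ^ j) sums ((1 / q) * (1 / (1 - 1 / q)))"
    using q by (intro sums_mult geometric_sums) simp
  moreover have "(1 / q) * (1 / (1 - 1 / q)) = 1 / (q - 1)" using q by (simp add: field_simps)
  ultimately show ?thesis by (simp add: power_one_over)
qed

lemma pi_sums:
  assumes "binary_seq e"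
  shows "(\<lambda>j. real (e j) / q ^ Suc j) sums pi_q q e"
proof -
  have "summable (\<lambda>j. real (e j) / q ^ Suc j)"
  proof (rule summable_comparison_test')
    show "summable (\<lambda>j. 1 / q ^ Suc j)" using sums_inverse_powers by (rule sums_summable)
    show "norm (real (e n) / q ^ Suc n) \<le> 1 / q ^ Suc n" for n
      using binary_seq_le_1[OF assms, of n] q by (simp add: divide_right_mono)
  qed
  then show ?thesis unfolding pi_q_def by (rule summable_sums)
qed

lemma pi_case_nat:
  assumes "binary_seq e"
  shows "pi_q q (case_nat a e) = (real a + pi_q q e) / q"
proof -
  have "(\<lambda>j. real (case_nat a e (Suc j)) / q ^ Suc (Suc j)) sums (pi_q q e / q)"
    using sums_divide[OF pi_sums[OF assms], of q] by (simp add: field_simps)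
  then have "(\<lambda>j. real (case_nat a e j) / q ^ Suc j) sums (pi_q q e / q + real a / q)"
    by (subst (asm) sums_Suc_iff) simp
  then show ?thesis unfolding pi_q_def by (simp add: sums_iff add_divide_distrib)
qed

lemma pi_prefix_run:
  assumes "binary_seq e" "a \<in> {0, 1}"
  shows "pi_q q (prefix_run a r e) = real a * (1 - 1 / q ^ r) / (q - 1) + pi_q q e / q ^ r"
proof (induction r)
  case (Suc r)
  have "pi_q q (prefix_run a (Suc r) e) = (real a + pi_q q (prefix_run a r e)) / q"
    unfolding prefix_run_Suc using assms by (intro pi_case_nat binary_seq_prefix_run)
  also have "\<dots> = (real a + (real a * (1 - 1 / q ^ r) / (q - 1) + pi_q q e / q ^ r)) / q"
    by (simp only: Suc.IH)
  also have "\<dots> = real a * (1 - 1 / q ^ Suc r) / (q - 1) + pi_q q e / q ^ Suc r"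
    using q by (simp add: field_simps)
  finally show ?case .
qed simp

lemma pi_flip:
  assumes "binary_seq e"
  shows "pi_q q (flip e) = 1 / (q - 1) - pi_q q e"
proof -
  have "real (flip e j) / q ^ Suc j = 1 / q ^ Suc j - real (e j) / q ^ Suc j" for j
    using binary_seqD[OF assms, of j] by (auto simp: flip_def)
  then have "(\<lambda>j. real (flip e j) / q ^ Suc j) sums (1 / (q - 1) - pi_q q e)"
    using sums_diff[OF sums_inverse_powers pi_sums[OF assms]] by simp
  then show ?thesis unfolding pi_q_def by (simp add: sums_iff)
qed

lemma pi_nonneg: "binary_seq e \<Longrightarrow> 0 \<le> pi_q q e"
  by (rule sums_le[OF _ sums_zero pi_sums]) (use q in auto)

lemma pi_le: "binary_seq e \<Longrightarrow> pi_q q e \<le> 1 / (q - 1)"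
  using pi_flip pi_nonneg binary_seq_flip by (metis diff_ge_0_iff_ge)

lemma pi_ones: "pi_q q (\<lambda>_. 1) = 1 / (q - 1)"
  using sums_inverse_powers unfolding pi_q_def by (simp add: sums_iff)

lemma pi_zeros: "pi_q q (\<lambda>_. 0) = 0"
  unfolding pi_q_def by simp

lemma pi_periodic:
  fixes b c r :: nat
  defines "p \<equiv> eventually_periodic [] (b # replicate r c)"
  assumes "b \<in> {0, 1}" "c \<in> {0, 1}"
  shows "pi_q q p = (real b + (real c * (1 - 1 / q ^ r) / (q - 1) + pi_q q p / q ^ r)) / q"
proof -
  have bin: "binary_seq p" unfolding p_def using assms(2,3) by (rule binary_seq_periodic)
  have "p = case_nat b (prefix_run c r p)"
    unfolding p_def by (rule eventually_periodic_Nil_Cons_replicate_unfold)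
  then have "pi_q q p = pi_q q (case_nat b (prefix_run c r p))" by (rule arg_cong)
  also have "\<dots> = (real b + pi_q q (prefix_run c r p)) / q"
    using assms(3) bin by (intro pi_case_nat binary_seq_prefix_run)
  finally show ?thesis using pi_prefix_run[OF bin assms(3)] by simp
qed

end

lemma g_qk_funpow_affine:
  assumes "0 < q"
  obtains \<alpha> \<beta> where "0 < \<alpha>" "g_qk q k ^^ i = (\<lambda>x. \<alpha> * x + \<beta>)"
proof (induction i arbitrary: thesis)
  case 0
  show ?case by (rule 0[of 1 0]) auto
next
  case (Suc i)
  obtain \<alpha> \<beta> where ab: "0 < \<alpha>" "g_qk q k ^^ i = (\<lambda>x. \<alpha> * x + \<beta>)" by (rule Suc.IH)
  show ?case
  proof (rule Suc.prems)
    show "0 < \<alpha> / q ^ k" using ab(1) assms by simp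
    show "g_qk q k ^^ Suc i = (\<lambda>x. \<alpha> / q ^ k * x + (\<beta> / q ^ k + (\<Sum>j\<in>{1..k-1}. 1 / q ^ j)))"
      using ab(2) by (simp add: g_qk_def fun_eq_iff add_divide_distrib)
  qed
qed

section \<open>Multinacci numbers\<close>

lemma sum_powers_div_strict_antimono:
  fixes x y :: real
  assumes "0 < x" "x < y" "1 \<le> j"
  shows "(\<Sum>i<j. y ^ i / y ^ j) < (\<Sum>i<j. x ^ i / x ^ j)"
proof (rule sum_strict_mono)
  fix i assume "i \<in> {..<j}"
  then have "y ^ i / y ^ j = (1 / y) ^ (j - i)" "x ^ i / x ^ j = (1 / x) ^ (j - i)"
    using assms by (simp_all add: power_diff power_one_over)
  moreover have "(1 / y) ^ (j - i) < (1 / x) ^ (j - i)"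
    using assms \<open>i \<in> {..<j}\<close> by (intro power_strict_mono) (auto simp: divide_strict_left_mono)
  ultimately show "y ^ i / y ^ j < x ^ i / x ^ j" by simp
qed (use assms in \<open>auto simp: lessThan_empty_iff\<close>)

lemma multinacci_root:
  assumes j: "2 \<le> j"
  shows "1 < multinacci j" "multinacci j < 2" "(\<Sum>i<j. multinacci j ^ i / multinacci j ^ j) = 1"
proof -
  define f where "f x = x ^ j - (\<Sum>i<j. x ^ i)" for x :: real
  have "f 1 < 0" using j by (simp add: f_def)
  moreover have "0 < f 2" using geometric_sum[of "2::real" j] by (simp add: f_def)
  moreover have "continuous_on {1..2} f" unfolding f_def by (intro continuous_intros)
  ultimately obtain r where r: "1 < r" "r < 2" "f r = 0"
    using IVT'[of f 1 0 2] by (force simp: order.order_iff_strict)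
  have ratio: "(\<Sum>i<j. x ^ i / x ^ j) = 1" if "0 < x" "f x = 0" for x :: real
  proof -
    have "(\<Sum>i<j. x ^ i) = x ^ j" using that by (simp add: f_def)
    moreover have "0 < x ^ j" using that by simp
    ultimately show ?thesis using that(1) by (simp flip: sum_divide_distrib)
  qed
  have "multinacci j = r"
    unfolding multinacci_def
  proof (rule the_equality)
    show "1 < r \<and> r < 2 \<and> r ^ j = (\<Sum>i<j. r ^ i)" using r by (simp add: f_def)
    fix x :: real assume x: "1 < x \<and> x < 2 \<and> x ^ j = (\<Sum>i<j. x ^ i)"
    then have "(\<Sum>i<j. x ^ i / x ^ j) = (\<Sum>i<j. r ^ i / r ^ j)"
      using ratio[of x] ratio[of r] r by (simp add: f_def)
    moreover have "1 \<le> j" using j by simp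
    ultimately show "x = r"
      using sum_powers_div_strict_antimono[of x r j] sum_powers_div_strict_antimono[of r x j] x r
      by (cases x r rule: linorder_cases) auto
  qed
  then show "1 < multinacci j" "multinacci j < 2" "(\<Sum>i<j. multinacci j ^ i / multinacci j ^ j) = 1"
    using r ratio by auto
qed

lemma sum_powers_less_above_multinacci:
  fixes q :: real
  assumes j: "2 \<le> j" and q: "multinacci j < q"
  shows "(\<Sum>i<j. q ^ i) < q ^ j"
proof -
  have "(\<Sum>i<j. q ^ i / q ^ j) < (\<Sum>i<j. multinacci j ^ i / multinacci j ^ j)"
    using multinacci_root[OF j] q j by (intro sum_powers_div_strict_antimono) auto
  then have "(\<Sum>i<j. q ^ i) / q ^ j < 1"
    using multinacci_root(3)[OF j] by (simp add: sum_divide_distrib)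
  then show ?thesis using multinacci_root(1)[OF j] q by (simp add: divide_less_eq)
qed

section \<open>The self-similar sets A and C\<close>

text \<open>\<open>\<pi>\<^sub>q(1\<^sup>r \<rho>') = branch q r (\<pi>\<^sub>q(\<rho>))\<close>, where \<open>\<rho>'\<close> is the complement of \<open>\<rho>\<close>.\<close>
definition branch :: "real \<Rightarrow> nat \<Rightarrow> real \<Rightarrow> real" where
  "branch q r a = 1 / (q - 1) - a / q ^ r"

definition A_set :: "real \<Rightarrow> nat \<Rightarrow> real set" where
  "A_set q s = pi_q q ` S_after (Suc s) 0"

text \<open>\<open>A_min q s = \<pi>\<^sub>q((1 0\<^sup>s)\<^sup>\<infinity>)\<close> and \<open>A_max q s = \<pi>\<^sub>q(1\<^sup>s (0 1\<^sup>s)\<^sup>\<infinity>)\<close>.\<close>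
definition A_min :: "real \<Rightarrow> nat \<Rightarrow> real" where
  "A_min q s = q ^ s / (q * q ^ s - 1)"

definition A_max :: "real \<Rightarrow> nat \<Rightarrow> real" where
  "A_max q s = branch q s (A_min q s)"

definition C_set :: "real \<Rightarrow> nat \<Rightarrow> real set" where
  "C_set q s = pi_q q ` S_set (Suc s)"

context
  fixes q :: real and s :: nat
  assumes q: "1 < q" and s: "1 \<le> s"
begin

lemma pi_prefix_run_ones:
  assumes "binary_seq \<rho>"
  shows "pi_q q (prefix_run 1 r \<rho>) = branch q r (pi_q q (flip \<rho>))"
proof -
  have "pi_q q (prefix_run 1 r \<rho>) = (1 - 1 / q ^ r) / (q - 1) + (1 / (q - 1) - pi_q q (flip \<rho>)) / q ^ r"
    using pi_prefix_run[OF q assms, of 1 r] pi_flip[OF q assms] by simp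
  also have "\<dots> = branch q r (pi_q q (flip \<rho>))"
    by (simp add: branch_def diff_divide_distrib add_divide_distrib divide_divide_eq_left mult.commute)
  finally show ?thesis .
qed

lemma A_set_eq_branches: "A_set q s = (\<Union>r\<in>{1..s}. branch q r ` A_set q s)"
proof (intro set_eqI iffI)
  fix v assume "v \<in> A_set q s"
  then obtain e where e: "e \<in> S_after (Suc s) 0" "v = pi_q q e" by (auto simp: A_set_def)
  obtain r \<rho> where r: "1 \<le> r" "r < Suc s" "\<rho> \<in> S_after (Suc s) 1" "e = prefix_run 1 r \<rho>"
    using S_after_first_run[where a = 0 and j = "Suc s"] e(1) by auto
  have bin: "binary_seq \<rho>" using r(3) by (rule S_after_binary_seq)
  have "flip \<rho> \<in> S_after (Suc s) 0" using flip_mem_S_after[of 1 \<rho>] r(3) by simp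
  then have "pi_q q (flip \<rho>) \<in> A_set q s" by (simp add: A_set_def)
  moreover have "v = branch q r (pi_q q (flip \<rho>))"
    using e(2) r(4) pi_prefix_run_ones[OF bin] by simp
  ultimately show "v \<in> (\<Union>r\<in>{1..s}. branch q r ` A_set q s)" using r by auto
next
  fix v assume "v \<in> (\<Union>r\<in>{1..s}. branch q r ` A_set q s)"
  then obtain r e where r: "1 \<le> r" "r \<le> s" "e \<in> S_after (Suc s) 0" "v = branch q r (pi_q q e)"
    by (auto simp: A_set_def)
  have bin: "binary_seq e" using r(3) by (rule S_after_binary_seq)
  have "flip e \<in> S_after (Suc s) 1" using flip_mem_S_after[of 0 e] r(3) by simp
  then have "prefix_run 1 r (flip e) \<in> S_after (Suc s) 0"
    using prefix_run_mem_S_after[of 1 "flip e" "Suc s" r] r by simp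
  moreover have "pi_q q (prefix_run 1 r (flip e)) = v"
    using r(4) pi_prefix_run_ones[OF binary_seq_flip[OF bin]] flip_flip[OF bin] by simp
  ultimately show "v \<in> A_set q s" unfolding A_set_def by blast
qed

lemma branch_mem_A_set: "1 \<le> r \<Longrightarrow> r \<le> s \<Longrightarrow> a \<in> A_set q s \<Longrightarrow> branch q r a \<in> A_set q s"
  by (subst A_set_eq_branches) auto

lemma A_set_branch_cases:
  assumes "a \<in> A_set q s"
  obtains r a' where "1 \<le> r" "r \<le> s" "a' \<in> A_set q s" "a = branch q r a'"
  using assms by (subst (asm) A_set_eq_branches) auto

lemma A_set_subset: "A_set q s \<subseteq> {0 .. 1 / (q - 1)}"
  unfolding A_set_def using pi_nonneg[OF q] pi_le[OF q] S_after_binary_seq by auto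

lemma branch_le_iff: "branch q r a \<le> branch q r a' \<longleftrightarrow> a' \<le> a"
  using q by (simp add: branch_def divide_le_cancel)

lemma branch_less_iff: "branch q r a < branch q r a' \<longleftrightarrow> a' < a"
  using q by (simp add: branch_def divide_less_cancel)

lemma branch_mono_index: "0 \<le> a \<Longrightarrow> r \<le> r' \<Longrightarrow> branch q r a \<le> branch q r' a"
  using q unfolding branch_def by (simp add: divide_left_mono power_increasing)

lemma branch_1_reflect: "branch q 1 (1 / (q - 1) - x) = (1 + x) / q"
proof -
  define T where "T = 1 / (q - 1)"
  have "T * (q - 1) = 1" using q by (simp add: T_def)
  then have "T - (T - x) / q = (1 + x) / q" using q by (simp add: field_simps algebra_simps)
  then show ?thesis unfolding branch_def T_def by simp
qed

lemma pi_periodic_one_zeros: "pi_q q (eventually_periodic [] (1 # replicate s 0)) = A_min q s"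
proof -
  let ?x = "pi_q q (eventually_periodic [] (1 # replicate s 0))"
  have "?x = (1 + ?x / q ^ s) / q" using pi_periodic[OF q, of 1 0 s] by simp
  then have "?x * (q * q ^ s - 1) = q ^ s" using q by (simp add: field_simps)
  moreover have "1 < q * q ^ s" using one_less_power[OF q, of "Suc s"] by simp
  ultimately show ?thesis unfolding A_min_def by (simp add: field_simps)
qed

lemma A_min_mem_A_set: "A_min q s \<in> A_set q s"
  using periodic_one_zeros_mem_S_after[OF s] pi_periodic_one_zeros unfolding A_set_def
  by (metis image_eqI)

lemma A_max_mem_A_set: "A_max q s \<in> A_set q s"
  unfolding A_max_def using s A_min_mem_A_set by (intro branch_mem_A_set) auto

lemma A_set_nonempty: "A_set q s \<noteq> {}"
  using A_min_mem_A_set by blast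

lemma bdd_A_set: "bdd_below (A_set q s)" "bdd_above (A_set q s)"
  using A_set_subset by (auto intro: bdd_below_mono bdd_above_mono)

lemma A_set_Inf_Sup:
  "branch q 1 (Sup (A_set q s)) \<le> Inf (A_set q s)"
  "Sup (A_set q s) \<le> branch q s (Inf (A_set q s))"
proof -
  let ?A = "A_set q s"
  have Inf_nonneg: "0 \<le> Inf ?A"
    using A_set_subset A_set_nonempty by (intro cInf_greatest) auto
  then have Sup_nonneg: "0 \<le> Sup ?A"
    using A_set_nonempty bdd_A_set by (meson cInf_le_cSup order_trans)
  show "branch q 1 (Sup ?A) \<le> Inf ?A"
  proof (rule cInf_greatest[OF A_set_nonempty])
    fix b assume "b \<in> ?A"
    then obtain r a' where r: "1 \<le> r" "r \<le> s" "a' \<in> ?A" "b = branch q r a'"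
      by (rule A_set_branch_cases)
    have "branch q 1 (Sup ?A) \<le> branch q r (Sup ?A)" by (rule branch_mono_index[OF Sup_nonneg r(1)])
    also have "\<dots> \<le> b" using cSup_upper[OF r(3) bdd_A_set(2)] r(4) by (simp add: branch_le_iff)
    finally show "branch q 1 (Sup ?A) \<le> b" .
  qed
  show "Sup ?A \<le> branch q s (Inf ?A)"
  proof (rule cSup_least[OF A_set_nonempty])
    fix b assume "b \<in> ?A"
    then obtain r a' where r: "1 \<le> r" "r \<le> s" "a' \<in> ?A" "b = branch q r a'"
      by (rule A_set_branch_cases)
    have "b \<le> branch q r (Inf ?A)" using cInf_lower[OF r(3) bdd_A_set(1)] r(4) by (simp add: branch_le_iff)
    also have "\<dots> \<le> branch q s (Inf ?A)" by (rule branch_mono_index[OF Inf_nonneg r(2)])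
    finally show "b \<le> branch q s (Inf ?A)" .
  qed
qed

lemma A_set_bounds:
  assumes "a \<in> A_set q s"
  shows "A_min q s \<le> a \<and> a \<le> A_max q s"
proof -
  let ?m = "Inf (A_set q s)" and ?M = "Sup (A_set q s)"
  have "branch q 1 (1 / (q - 1) - ?m / q ^ s) \<le> branch q 1 ?M"
    unfolding branch_le_iff using A_set_Inf_Sup(2) by (simp add: branch_def)
  then have "(1 + ?m / q ^ s) / q \<le> ?m" using A_set_Inf_Sup(1) branch_1_reflect by simp
  moreover have "(1 + x / q ^ s) / q \<le> x \<Longrightarrow> q ^ s \<le> x * (q * q ^ s - 1)" for x
    using q by (simp add: field_simps)
  ultimately have "q ^ s \<le> ?m * (q * q ^ s - 1)" by blast
  moreover have "1 < q * q ^ s" using one_less_power[OF q, of "Suc s"] by simp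
  ultimately have m: "A_min q s \<le> ?m" unfolding A_min_def by (simp add: divide_le_eq mult.commute)
  then have "branch q s ?m \<le> A_max q s" unfolding A_max_def by (simp add: branch_le_iff)
  then have "?M \<le> A_max q s" using A_set_Inf_Sup(2) by linarith
  then show ?thesis
    using m cInf_lower[OF assms bdd_A_set(1)] cSup_upper[OF assms bdd_A_set(2)] by linarith
qed

lemma A_min_pos: "0 < A_min q s"
  unfolding A_min_def using one_less_power[OF q, of "Suc s"] q by simp

lemma A_max_pos: "0 < A_max q s"
  using A_set_bounds[OF A_max_mem_A_set] A_min_pos by linarith

lemma branch_A_set_bounds:
  "a \<in> A_set q s \<Longrightarrow> branch q r (A_max q s) \<le> branch q r a \<and> branch q r a \<le> branch q r (A_min q s)"
  using A_set_bounds by (simp add: branch_le_iff)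

lemma A_min_fixpoint: "A_min q s = (1 + A_min q s / q ^ s) / q"
  using pi_periodic[OF q, of 1 0 s] unfolding pi_periodic_one_zeros by simp

lemma branch_1_A_max: "branch q 1 (A_max q s) = A_min q s"
proof -
  have "branch q 1 (A_max q s) = (1 + A_min q s / q ^ s) / q"
    unfolding A_max_def branch_def[of q s] by (rule branch_1_reflect)
  also have "\<dots> = A_min q s" by (rule A_min_fixpoint[symmetric])
  finally show ?thesis .
qed

lemma div_power_mem_C_set:
  assumes "a \<in> A_set q s"
  shows "a / q ^ n \<in> C_set q s"
proof -
  obtain e where e: "e \<in> S_after (Suc s) 0" "a = pi_q q e" using assms by (auto simp: A_set_def)
  have "prefix_run 0 n e \<in> S_set (Suc s)" using prefix_run_mem_S_set[of 0 e] e(1) by simp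
  moreover have "pi_q q (prefix_run 0 n e) = a / q ^ n"
    using pi_prefix_run[OF q S_after_binary_seq[OF e(1)], of 0 n] e(2) by simp
  ultimately show ?thesis unfolding C_set_def by (metis image_eqI)
qed

lemma reflect_mem_C_set:
  assumes "c \<in> C_set q s"
  shows "1 / (q - 1) - c \<in> C_set q s"
proof -
  obtain e where e: "e \<in> S_set (Suc s)" "c = pi_q q e" using assms by (auto simp: C_set_def)
  then have "pi_q q (flip e) = 1 / (q - 1) - c" using pi_flip[OF q S_set_binary_seq[OF e(1)]] by simp
  then show ?thesis using flip_mem_S_set[OF e(1)] unfolding C_set_def by (metis image_eqI)
qed

lemma C_set_reflect: "(\<lambda>x. 1 / (q - 1) - x) ` C_set q s = C_set q s"
  using reflect_mem_C_set by (force simp: image_iff)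

lemma C_set_subset: "C_set q s \<subseteq> {0 .. 1 / (q - 1)}"
  unfolding C_set_def using pi_nonneg[OF q] pi_le[OF q] S_set_binary_seq by auto

lemma zero_mem_C_set: "0 \<in> C_set q s"
  unfolding C_set_def using zeros_mem_S_set[of "Suc s"] pi_zeros[OF q] by (metis image_eqI zero_less_Suc)

lemma head_zero_pi_cases:
  assumes e: "e \<in> S_set (Suc s)" "e 0 = 0"
  shows "pi_q q e = 0 \<or> (\<exists>n\<ge>1. \<exists>a\<in>A_set q s. pi_q q e = a / q ^ n)"
proof (cases "\<exists>n. e n \<noteq> 0")
  case True
  then obtain n where "e n \<noteq> 0" by blast
  then obtain r \<rho> where r: "1 \<le> r" "r \<le> n" "\<rho> \<in> S_after (Suc s) 0" "e = prefix_run 0 r \<rho>"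
    by (rule S_set_first_run[OF e]) simp
  then have "pi_q q e = pi_q q \<rho> / q ^ r"
    using pi_prefix_run[OF q S_after_binary_seq[OF r(3)], of 0 r] by simp
  then show ?thesis using r unfolding A_set_def by blast
next
  case False
  then have "e = (\<lambda>_. 0)" by auto
  then show ?thesis by (simp add: pi_zeros[OF q])
qed

lemma C_set_cases:
  assumes "c \<in> C_set q s"
  shows "c = 0 \<or> (\<exists>n\<ge>1. \<exists>a\<in>A_set q s. c = a / q ^ n) \<or> A_min q s \<le> c"
proof -
  obtain e where e: "e \<in> S_set (Suc s)" "c = pi_q q e" using assms by (auto simp: C_set_def)
  have "e 0 \<in> {0, 1}" using S_set_binary_seq[OF e(1)] by (rule binary_seqD)
  then consider "e 0 = 0" | "e 0 = 1" by auto
  then show ?thesis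
  proof cases
    case 1
    then show ?thesis using head_zero_pi_cases[OF e(1)] e(2) by blast
  next
    case 2
    have bin: "binary_seq e" using e(1) by (rule S_set_binary_seq)
    have "flip e \<in> S_set (Suc s)" "flip e 0 = 0" using flip_mem_S_set[OF e(1)] 2 by (auto simp: flip_def)
    moreover have "a / q ^ n \<le> A_max q s / q" if "1 \<le> n" "a \<in> A_set q s" for n a
    proof -
      have "0 \<le> a" "a \<le> A_max q s" using that(2) A_set_subset A_set_bounds by auto
      then have "a / q ^ n \<le> A_max q s / q ^ n" using q by (simp add: divide_right_mono)
      also have "\<dots> \<le> A_max q s / q ^ 1"
        using \<open>0 \<le> a\<close> \<open>a \<le> A_max q s\<close> q that(1) by (intro divide_left_mono power_increasing) auto
      finally show ?thesis by simp
    qed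
    moreover have "0 \<le> A_max q s / q" using A_max_mem_A_set A_set_subset q by auto
    ultimately have "pi_q q (flip e) \<le> A_max q s / q" using head_zero_pi_cases by fastforce
    then have "A_min q s \<le> c" using pi_flip[OF q bin] e(2) branch_1_A_max by (simp add: branch_def)
    then show ?thesis by blast
  qed
qed

lemma bdd_above_glen_gaps: "bdd_above (glen ` gaps (A_set q s))"
proof (rule bdd_aboveI2)
  fix G assume "G \<in> gaps (A_set q s)"
  then have "fst G \<in> A_set q s" "snd G \<in> A_set q s" by (auto simp: gaps_def)
  then have "0 \<le> fst G" "snd G \<le> 1 / (q - 1)" using A_set_subset by auto
  then show "glen G \<le> 1 / (q - 1)" by (simp add: glen_def)
qed

lemma div_power_A_set_bounds:
  "a \<in> A_set q s \<Longrightarrow> A_min q s / q ^ m \<le> a / q ^ m \<and> a / q ^ m \<le> A_max q s / q ^ m"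
  using A_set_bounds q by (auto intro: divide_right_mono)

context
  assumes sep: "A_max q s < q * A_min q s"
begin

lemma div_power_levels_less:
  assumes "n < n'"
  shows "A_max q s / q ^ n' < A_min q s / q ^ n"
proof -
  have "A_max q s / q ^ n' \<le> A_max q s / q ^ Suc n"
    using A_max_pos q assms by (intro divide_left_mono power_increasing) auto
  also have "\<dots> < A_min q s / q ^ n" using sep q by (simp add: field_simps)
  finally show ?thesis .
qed

lemma branch_blocks_less: "r < r' \<Longrightarrow> branch q r (A_min q s) < branch q r' (A_max q s)"
  using div_power_levels_less by (simp add: branch_def)

lemma branch_blocks_gap:
  "branch q (Suc r) (A_max q s) - branch q r (A_min q s) = (q * A_min q s - A_max q s) / q ^ Suc r"
proof -
  have "q \<noteq> 0" using q by simp
  then show ?thesis by (simp add: branch_def field_simps)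
qed

lemma A_set_gap_cases:
  assumes gap: "(u, v) \<in> gaps (A_set q s)"
  obtains (image) r a a' where "1 \<le> r" "r \<le> s" "(a', a) \<in> gaps (A_set q s)"
      "u = branch q r a" "v = branch q r a'"
    | (between) r where "1 \<le> r" "u = branch q r (A_min q s)" "v = branch q (Suc r) (A_max q s)"
proof -
  let ?A = "A_set q s"
  have mem: "branch q k (A_max q s) \<in> ?A" "branch q k (A_min q s) \<in> ?A" if "1 \<le> k" "k \<le> s" for k
    using branch_mem_A_set[OF that] A_min_mem_A_set A_max_mem_A_set by auto
  have uv: "u \<in> ?A" "v \<in> ?A" "u < v" using gap by (auto simp: gaps_def)
  obtain r a where r: "1 \<le> r" "r \<le> s" "a \<in> ?A" "u = branch q r a"
    using uv(1) by (rule A_set_branch_cases)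
  obtain r' a' where r': "1 \<le> r'" "r' \<le> s" "a' \<in> ?A" "v = branch q r' a'"
    using uv(2) by (rule A_set_branch_cases)
  have u: "branch q r (A_max q s) \<le> u" "u \<le> branch q r (A_min q s)"
    and v: "branch q r' (A_max q s) \<le> v" "v \<le> branch q r' (A_min q s)"
    using branch_A_set_bounds r r' by auto
  consider "r' < r" | "r' = r" | "r' = Suc r" | "Suc r < r'" by linarith
  then show ?thesis
  proof cases
    case 1
    then show ?thesis using branch_blocks_less[OF 1] u v uv(3) by linarith
  next
    case 2
    have "(a', a) \<in> gaps ?A"
    proof (rule gaps_preimage_antimono[where f = "branch q r"])
      show "branch q r ` ?A \<subseteq> ?A" using branch_mem_A_set r by auto
    qed (use gap r r' 2 in \<open>auto simp: branch_less_iff\<close>)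
    then show ?thesis using image r r' 2 by blast
  next
    case 3
    have "u = branch q r (A_min q s) \<and> v = branch q r' (A_max q s)"
      by (rule gap_eq_if_between[OF gap]) (use mem r r' 3 u v branch_blocks_less in auto)
    then show ?thesis using between r(1) 3 by blast
  next
    case 4
    have "branch q (Suc r) (A_max q s) < branch q r' (A_max q s)"
      using branch_blocks_less[OF 4] branch_A_set_bounds[OF A_min_mem_A_set, of "Suc r"] by linarith
    moreover have "u < branch q (Suc r) (A_max q s)" using u(2) branch_blocks_less[of r "Suc r"] by simp
    ultimately have "u = branch q (Suc r) (A_max q s)"
      using gap_eq_if_between[OF gap] mem[of "Suc r"] mem[of r'] r' 4 v by fastforce
    then show ?thesis using \<open>u < branch q (Suc r) (A_max q s)\<close> by simp
  qed
qed

lemma A_set_gap_le_max: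
  assumes G: "G \<in> gaps (A_set q s)"
  shows "glen G \<le> max (Sup (glen ` gaps (A_set q s)) / q) ((q * A_min q s - A_max q s) / q ^ 2)"
proof -
  let ?g = "Sup (glen ` gaps (A_set q s))"
  obtain u v where uv: "G = (u, v)" by (cases G)
  from G[unfolded uv] show ?thesis
  proof (cases rule: A_set_gap_cases)
    case (image r a a')
    have "glen G = (a - a') / q ^ r" using image uv by (simp add: glen_def branch_def diff_divide_distrib)
    also have "\<dots> \<le> ?g / q ^ r"
      using cSup_upper[OF imageI[OF image(3)] bdd_above_glen_gaps] q by (simp add: glen_def divide_right_mono)
    also have "\<dots> \<le> ?g / q"
    proof (rule divide_left_mono)
      show "0 \<le> ?g" using cSup_upper[OF imageI[OF G] bdd_above_glen_gaps] glen_gap_pos[OF G] by simp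
      show "q \<le> q ^ r" using power_increasing[of 1 r q] q image(1) by simp
    qed (use q in simp)
    finally show ?thesis by simp
  next
    case (between r)
    have "glen G = (q * A_min q s - A_max q s) / q ^ Suc r"
      using between uv branch_blocks_gap by (simp add: glen_def)
    also have "\<dots> \<le> (q * A_min q s - A_max q s) / q ^ 2"
      using sep q between(1) by (intro divide_left_mono power_increasing) auto
    finally show ?thesis by simp
  qed
qed

lemma A_set_gap_le:
  assumes G: "G \<in> gaps (A_set q s)"
  shows "glen G \<le> (q * A_min q s - A_max q s) / q ^ 2"
proof -
  let ?g = "Sup (glen ` gaps (A_set q s))" and ?h = "(q * A_min q s - A_max q s) / q ^ 2"
  have le_g: "glen G \<le> ?g" by (rule cSup_upper[OF imageI[OF G] bdd_above_glen_gaps])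
  have "?g \<le> max (?g / q) ?h" using A_set_gap_le_max G by (intro cSup_least) auto
  moreover have "0 < ?g" using le_g glen_gap_pos[OF G] by simp
  ultimately have "?g \<le> ?h" using q by (auto simp: max_def field_simps split: if_splits)
  then show ?thesis using le_g by simp
qed

lemma div_power_level_le: "A_min q s / q ^ n \<le> A_max q s / q ^ N \<Longrightarrow> N \<le> n"
  using div_power_levels_less[of n N] by (meson not_le not_less)


lemma C_set_gap_between_levels: "(A_max q s / q ^ Suc n, A_min q s / q ^ n) \<in> gaps (C_set q s)"
proof -
  let ?u = "A_max q s / q ^ Suc n" and ?v = "A_min q s / q ^ n"
  have no_point: "c \<le> ?u \<or> ?v \<le> c" if c: "c \<in> C_set q s" for c
  proof (rule ccontr)
    assume "\<not> ?thesis"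
    then have between: "?u < c" "c < ?v" by auto
    have "0 \<le> ?u" using less_imp_le[OF A_max_pos] q by simp
    moreover have "?v \<le> A_min q s / 1"
      using A_min_pos q by (intro divide_left_mono) (auto simp: one_le_power)
    ultimately have "c \<noteq> 0" "\<not> A_min q s \<le> c" using between by auto
    then obtain m a where m: "1 \<le> m" "a \<in> A_set q s" "c = a / q ^ m"
      using C_set_cases[OF c] by blast
    have "A_min q s / q ^ m \<le> c" "c \<le> A_max q s / q ^ m"
      using A_set_bounds[OF m(2)] m(3) q by (auto intro: divide_right_mono)
    show False
    proof (cases "m \<le> n")
      case True
      then have "A_min q s / q ^ n \<le> A_min q s / q ^ m"
        using A_min_pos q by (intro divide_left_mono power_increasing) auto
      then show False using between \<open>A_min q s / q ^ m \<le> c\<close> by linarith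
    next
      case False
      then have "A_max q s / q ^ m \<le> A_max q s / q ^ Suc n"
        using less_imp_le[OF A_max_pos] q by (intro divide_left_mono power_increasing) auto
      then show False using between \<open>c \<le> A_max q s / q ^ m\<close> by linarith
    qed
  qed
  have "?u \<in> C_set q s" "?v \<in> C_set q s"
    using div_power_mem_C_set[OF A_max_mem_A_set] div_power_mem_C_set[OF A_min_mem_A_set] by blast+
  moreover have "?u < ?v" by (rule div_power_levels_less) simp
  ultimately show ?thesis using no_point by (force simp: gaps_def)
qed

lemma C_set_gap_level_cases:
  assumes gap: "(a / q ^ n, a' / q ^ n') \<in> gaps (C_set q s)" and a: "a \<in> A_set q s" "a' \<in> A_set q s"
  shows "n = n' \<and> (a, a') \<in> gaps (A_set q s)
         \<or> n = Suc n' \<and> a / q ^ n = A_max q s / q ^ n \<and> a' / q ^ n' = A_min q s / q ^ n'"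
proof -
  let ?C = "C_set q s"
  have mem: "A_min q s / q ^ m \<in> ?C" "A_max q s / q ^ m \<in> ?C" for m
    using div_power_mem_C_set A_min_mem_A_set A_max_mem_A_set by blast+
  note u = div_power_A_set_bounds[OF a(1), of n] and v = div_power_A_set_bounds[OF a(2), of n']
  consider "n < n'" | "n = n'" | "n = Suc n'" | "Suc n' < n" by linarith
  then show ?thesis
  proof cases
    case 1
    then show ?thesis using div_power_levels_less[OF 1] u v gap by (auto simp: gaps_def)
  next
    case 2
    have "(a, a') \<in> gaps (A_set q s)"
    proof (rule gaps_preimage_mono[where f = "\<lambda>x. x / q ^ n"])
      show "strict_mono (\<lambda>x. x / q ^ n)" using q by (auto simp: strict_mono_def divide_strict_right_mono)
      show "(\<lambda>x. x / q ^ n) ` A_set q s \<subseteq> ?C" using div_power_mem_C_set by blast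
    qed (use gap a 2 in auto)
    then show ?thesis using 2 by blast
  next
    case 3
    have "a / q ^ n = A_max q s / q ^ n \<and> a' / q ^ n' = A_min q s / q ^ n'"
      by (rule gap_eq_if_between[OF gap mem(2) mem(1)])
        (use div_power_levels_less[of n' n] 3 u v in auto)
    then show ?thesis using 3 by blast
  next
    case 4
    have "A_min q s / q ^ (n - 1) \<le> A_max q s / q ^ (n - 1)"
      using A_set_bounds[OF A_min_mem_A_set] q by (simp add: divide_right_mono)
    also have "\<dots> < A_min q s / q ^ n'" using 4 by (intro div_power_levels_less) simp
    finally have "A_min q s / q ^ (n - 1) < a' / q ^ n'" using v by linarith
    moreover have "a / q ^ n < A_min q s / q ^ (n - 1)"
      using div_power_levels_less[of "n - 1" n] u 4 by simp
    ultimately show ?thesis using gap_no_point_between[OF gap mem(1)[of "n - 1"]] by simp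
  qed
qed

lemma C_set_gap_cases:
  assumes gap: "(u, v) \<in> gaps (C_set q s)" and v: "v < A_min q s"
  obtains (level) n a a' where "1 \<le> n" "(a, a') \<in> gaps (A_set q s)" "u = a / q ^ n" "v = a' / q ^ n"
    | (between) n where "u = A_max q s / q ^ Suc n" "v = A_min q s / q ^ n"
proof -
  have uv: "u \<in> C_set q s" "v \<in> C_set q s" "u < v" using gap by (auto simp: gaps_def)
  then have "0 \<le> u" using C_set_subset by auto
  obtain n' a' where n': "1 \<le> n'" "a' \<in> A_set q s" "v = a' / q ^ n'"
    using C_set_cases[OF uv(2)] uv(3) \<open>0 \<le> u\<close> v by auto
  have "A_max q s / q ^ Suc n' \<in> C_set q s" by (rule div_power_mem_C_set[OF A_max_mem_A_set])
  moreover have "0 < A_max q s / q ^ Suc n'" using A_max_pos q by simp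
  moreover have "A_max q s / q ^ Suc n' < v"
    using div_power_levels_less[of n' "Suc n'"] div_power_A_set_bounds[OF n'(2), of n'] n'(3) by linarith
  ultimately have "u \<noteq> 0" using gap_no_point_between[OF gap] by fastforce
  then obtain n a where n: "1 \<le> n" "a \<in> A_set q s" "u = a / q ^ n"
    using C_set_cases[OF uv(1)] uv(3) v by auto
  show ?thesis
    using C_set_gap_level_cases[OF gap[unfolded n(3) n'(3)] n(2) n'(2)] level between n n' by blast
qed

lemma C_set_gap_le:
  assumes G: "G \<in> gaps (C_set q s)" and N: "1 \<le> N" and le: "snd G \<le> A_max q s / q ^ N"
  shows "glen G \<le> (q * A_min q s - A_max q s) / q ^ N"
proof -
  obtain u v where uv: "G = (u, v)" by (cases G)
  have h: "0 \<le> q * A_min q s - A_max q s" using sep by simp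
  have "A_max q s / q ^ N < A_min q s / q ^ (N - 1)" using N by (intro div_power_levels_less) simp
  also have "\<dots> \<le> A_min q s / 1" using A_min_pos q by (intro divide_left_mono) (auto simp: one_le_power)
  finally have "v < A_min q s" using le uv by simp
  from G[unfolded uv] this show ?thesis
  proof (cases rule: C_set_gap_cases)
    case (level n a a')
    have "a' \<in> A_set q s" using level(2) by (simp add: gaps_def)
    then have "A_min q s / q ^ n \<le> v" using level(4) A_set_bounds q by (simp add: divide_right_mono)
    then have "A_min q s / q ^ n \<le> A_max q s / q ^ N" using le uv by simp
    then have "N \<le> n" by (rule div_power_level_le)
    have "glen G = (a' - a) / q ^ n" using uv level by (simp add: glen_def diff_divide_distrib)
    also have "\<dots> \<le> ((q * A_min q s - A_max q s) / q ^ 2) / q ^ n"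
    proof -
      have "a' - a \<le> (q * A_min q s - A_max q s) / q ^ 2"
        using A_set_gap_le[OF level(2)] by (simp add: glen_def)
      then show ?thesis using q by (intro divide_right_mono) auto
    qed
    also have "\<dots> = (q * A_min q s - A_max q s) / q ^ (2 + n)" by (simp add: power_add power2_eq_square)
    also have "\<dots> \<le> (q * A_min q s - A_max q s) / q ^ N"
      using h q \<open>N \<le> n\<close> by (intro divide_left_mono power_increasing) auto
    finally show ?thesis .
  next
    case (between n)
    have "N \<le> n" using between le uv by (intro div_power_level_le) simp
    have "glen G = (q * A_min q s - A_max q s) / q ^ Suc n"
      using between uv q by (simp add: glen_def field_simps)
    also have "\<dots> \<le> (q * A_min q s - A_max q s) / q ^ N"
      using h q \<open>N \<le> n\<close> by (intro divide_left_mono power_increasing) auto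
    finally show ?thesis .
  qed
qed

end

end

section \<open>Cutting C at the gaps between its blocks\<close>

lemma frac_less_cross: "0 < b \<Longrightarrow> 0 < d \<Longrightarrow> a * d < c * b \<Longrightarrow> a / b < c / (d :: real)"
  by (simp add: field_simps)

lemma frac_le_cross: "0 < b \<Longrightarrow> 0 < d \<Longrightarrow> a * d \<le> c * b \<Longrightarrow> a / b \<le> c / (d :: real)"
  by (simp add: field_simps)

definition W_val :: "real \<Rightarrow> nat \<Rightarrow> real" where
  "W_val q s = pi_q q (eventually_periodic [] (0 # replicate (Suc s) 1))"

context
  fixes q :: real and s :: nat
  assumes q: "1 < q" and s: "1 \<le> s"
begin

lemma multinacci_less_imp_power_bound:
  assumes "multinacci (Suc s) < q" "q < 2"
  shows "q * q ^ s * (2 - q) < 1"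
proof -
  have "(\<Sum>i<Suc s. q ^ i) < q ^ Suc s"
    using sum_powers_less_above_multinacci[of "Suc s" q] s assms(1) by simp
  moreover have "(\<Sum>i<Suc s. q ^ i) = (q ^ Suc s - 1) / (q - 1)"
    using geometric_sum[of q "Suc s"] q by simp
  ultimately have "q ^ Suc s - 1 < q ^ Suc s * (q - 1)" using q by (simp add: divide_less_eq)
  then show ?thesis by (simp add: algebra_simps)
qed

lemma A_max_eq: "A_max q s = (q * q ^ s - q) / ((q - 1) * (q * q ^ s - 1))"
proof -
  have "q - 1 \<noteq> 0" "q * q ^ s - 1 \<noteq> 0" "q ^ s \<noteq> 0"
    using q one_less_power[OF q, of "Suc s"] by auto
  then show ?thesis
    unfolding A_max_def branch_def A_min_def by (simp add: diff_frac_eq)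
qed

lemma W_val_eq: "W_val q s = (q * q ^ s - 1) / ((q - 1) * (q * (q * q ^ s) - 1))"
proof -
  define Q where "Q = q * q ^ s"
  have eq: "W_val q s = ((1 - 1 / Q) / (q - 1) + W_val q s / Q) / q"
    using pi_periodic[OF q, of 0 1 "Suc s"] unfolding W_val_def Q_def by simp
  have "1 < Q" using one_less_power[OF q, of "Suc s"] by (simp add: Q_def)
  then have "0 < q * Q - 1" using q by (simp add: less_1_mult)
  have "W_val q s * q * Q = (1 - 1 / Q) * Q / (q - 1) + W_val q s"
    using eq q \<open>1 < Q\<close> by (simp add: field_simps)
  also have "(1 - 1 / Q) * Q = Q - 1" using \<open>1 < Q\<close> by (simp add: algebra_simps)
  finally have "W_val q s * (q * Q - 1) = (Q - 1) / (q - 1)" by (simp add: algebra_simps)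
  then have "W_val q s = (Q - 1) / (q - 1) / (q * Q - 1)"
    using \<open>0 < q * Q - 1\<close> by (metis less_irrefl nonzero_mult_div_cancel_right)
  then show ?thesis unfolding Q_def by (simp add: divide_divide_eq_left)
qed

context
  assumes H: "q * q ^ s * (2 - q) < 1"
begin

lemma A_max_less_q_A_min: "A_max q s < q * A_min q s"
proof -
  define Q where "Q = q * q ^ s"
  have Q1: "1 < Q" using one_less_power[OF q, of "Suc s"] by (simp add: Q_def)
  have "Q * (2 - q) < q" using H q unfolding Q_def by linarith
  then have "Q - q < Q * (q - 1)" by (simp add: algebra_simps)
  then have "(Q - q) * (Q - 1) < Q * ((q - 1) * (Q - 1))"
    using Q1 by (simp add: mult_strict_right_mono mult.assoc)
  then have "(Q - q) / ((q - 1) * (Q - 1)) < Q / (Q - 1)"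
    using Q1 q by (intro frac_less_cross) auto
  then show ?thesis unfolding A_max_eq A_min_def Q_def[symmetric] by (simp add: Q_def)
qed

lemma A_max_le_q_W_val: "A_max q s \<le> q * W_val q s"
proof -
  define Q where "Q = q * q ^ s"
  have Q1: "1 < Q" using one_less_power[OF q, of "Suc s"] by (simp add: Q_def)
  then have qQ: "0 < q * Q - 1" using q by (simp add: less_1_mult)
  have "0 \<le> Q * ((q - 1) * (q - 1)) * (q - 1)" using Q1 q by simp
  then have "(Q - q) * ((q - 1) * (q * Q - 1)) \<le> (q * (Q - 1)) * ((q - 1) * (Q - 1))"
    by (simp add: algebra_simps)
  then have "(Q - q) / ((q - 1) * (Q - 1)) \<le> (q * (Q - 1)) / ((q - 1) * (q * Q - 1))"
    using Q1 qQ q by (intro frac_le_cross) auto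
  then show ?thesis unfolding A_max_eq W_val_eq Q_def[symmetric] by simp
qed

lemma W_val_less_A_min: "W_val q s < A_min q s"
proof -
  define P where "P = q ^ s"
  define Q where "Q = q * P"
  have Q1: "1 < Q" using one_less_power[OF q, of "Suc s"] by (simp add: Q_def P_def)
  then have qQ: "0 < q * Q - 1" using q by (simp add: less_1_mult)
  have "Q * (Q * (2 - q)) < Q * 1"
    using H Q1 unfolding Q_def P_def by (intro mult_strict_left_mono) (auto simp: mult.assoc)
  moreover have "1 < P" using one_less_power[OF q] s by (simp add: P_def)
  moreover have "P * ((q - 1) * (q * Q - 1)) - (Q - 1) * (Q - 1) = Q * (Q * (q - 2)) + Q + P - 1"
    unfolding Q_def by (simp add: algebra_simps)
  ultimately have "(Q - 1) * (Q - 1) < P * ((q - 1) * (q * Q - 1))" by (simp add: algebra_simps)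
  then have "(Q - 1) / ((q - 1) * (q * Q - 1)) < P / (Q - 1)"
    using Q1 qQ q by (intro frac_less_cross) auto
  then show ?thesis unfolding W_val_eq A_min_def P_def[symmetric] Q_def[symmetric] .
qed

lemma level_gap_length:
  "A_min q s / q ^ n - A_max q s / q ^ Suc n = (q * A_min q s - A_max q s) / q ^ Suc n"
proof -
  have "q \<noteq> 0" using q by simp
  then show ?thesis by (simp add: diff_divide_distrib)
qed

lemma C_set_cut: "C_set q s \<inter> {0 .. W_val q s / q ^ n} = C_set q s \<inter> {0 .. A_max q s / q ^ Suc n}"
proof -
  have "A_max q s / q \<le> W_val q s" using A_max_le_q_W_val q by (simp add: divide_le_eq mult.commute)
  then have "A_max q s / q / q ^ n \<le> W_val q s / q ^ n" by (rule divide_right_mono) (use q in simp)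
  then have "A_max q s / q ^ Suc n \<le> W_val q s / q ^ n" by (simp add: mult.commute)
  moreover have "W_val q s / q ^ n < A_min q s / q ^ n"
    using W_val_less_A_min q by (simp add: divide_strict_right_mono)
  moreover have "c \<le> A_max q s / q ^ Suc n \<or> A_min q s / q ^ n \<le> c" if "c \<in> C_set q s" for c
    using gap_no_point_between[OF C_set_gap_between_levels[OF q s A_max_less_q_A_min] that] .
  ultimately show ?thesis by fastforce
qed

lemma thickness_C_set_le_initial_segment:
  fixes \<alpha> \<beta> :: real
  assumes "0 < \<alpha>"
  shows "thickness (C_set q s) \<le> thickness ((\<lambda>x. \<alpha> * x + \<beta>) ` (C_set q s \<inter> {0 .. A_max q s / q ^ Suc n}))"
proof (rule thickness_le_affine_restrict[OF _ _ zero_mem_C_set[OF q s] _ assms])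
  let ?C = "C_set q s" and ?b = "A_max q s / q ^ Suc n"
  have gap: "(?b, A_min q s / q ^ n) \<in> gaps ?C" by (rule C_set_gap_between_levels[OF q s A_max_less_q_A_min])
  then show "?b \<in> ?C" by (simp add: gaps_def)
  show "bdd_below ?C" "bdd_above ?C" using C_set_subset[OF q s] by (auto intro: bdd_below_mono bdd_above_mono)
  fix G assume G: "G \<in> gaps (?C \<inter> {0 .. ?b})"
  then have GC: "G \<in> gaps ?C" "snd G \<le> ?b" by (auto simp: gaps_restrict)
  have "Inf ?C = 0" using zero_mem_C_set[OF q s] C_set_subset[OF q s] by (intro cInf_eq_minimum) auto
  then have "0 \<in> left_barriers ?C G" by (simp add: left_barriers_def)
  moreover have "?b \<in> right_barriers ?C G"
  proof -
    have "glen G \<le> (q * A_min q s - A_max q s) / q ^ Suc n"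
      using C_set_gap_le[OF q s A_max_less_q_A_min GC(1) _ GC(2)] by simp
    also have "\<dots> = glen (?b, A_min q s / q ^ n)"
      by (simp only: glen_def fst_conv snd_conv level_gap_length)
    finally have "glen G \<le> glen (?b, A_min q s / q ^ n)" .
    moreover have "(?b, A_min q s / q ^ n) \<noteq> G" using GC gapsD[OF GC(1)] by auto
    ultimately show ?thesis
      unfolding right_barriers_def using gap GC(2)
      by (intro insertI2 image_eqI[where x = "(?b, A_min q s / q ^ n)"]) auto
  qed
  ultimately show "0 \<in> left_barriers ?C G \<and> ?b \<in> right_barriers ?C G" ..
qed

lemma thickness_C_set_le_final_segment:
  fixes \<alpha> \<beta> :: real
  assumes "0 < \<alpha>"
  shows "thickness (C_set q s) \<le> thickness ((\<lambda>x. \<alpha> * x + \<beta>)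
           ` (C_set q s \<inter> {1 / (q - 1) - A_max q s / q ^ Suc n .. 1 / (q - 1)}))"
proof (rule thickness_le_affine_restrict[OF _ _ _ _ assms])
  let ?C = "C_set q s" and ?b = "A_max q s / q ^ Suc n" and ?T = "1 / (q - 1)"
  have sym: "(\<lambda>x. ?T - x) ` ?C = ?C" by (rule C_set_reflect[OF q s])
  have gap: "(?b, A_min q s / q ^ n) \<in> gaps ?C" by (rule C_set_gap_between_levels[OF q s A_max_less_q_A_min])
  have gap': "(?T - A_min q s / q ^ n, ?T - ?b) \<in> gaps ?C" by (rule gaps_reflect[OF sym gap])
  then show "?T - ?b \<in> ?C" by (simp add: gaps_def)
  show "?T \<in> ?C" using reflect_mem_C_set[OF q s zero_mem_C_set[OF q s]] by simp
  show "bdd_below ?C" "bdd_above ?C" using C_set_subset[OF q s] by (auto intro: bdd_below_mono bdd_above_mono)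
  fix G assume G: "G \<in> gaps (?C \<inter> {?T - ?b .. ?T})"
  obtain u v where uv: "G = (u, v)" by (cases G)
  have GC: "(u, v) \<in> gaps ?C" "?T - ?b \<le> u" "v \<le> ?T" using G uv by (auto simp: gaps_restrict)
  have "(?T - v, ?T - u) \<in> gaps ?C" by (rule gaps_reflect[OF sym GC(1)])
  then have "glen (?T - v, ?T - u) \<le> (q * A_min q s - A_max q s) / q ^ Suc n"
    using GC(2) by (intro C_set_gap_le[OF q s A_max_less_q_A_min]) auto
  also have "\<dots> = glen (?b, A_min q s / q ^ n)"
    by (simp only: glen_def fst_conv snd_conv level_gap_length)
  also have "\<dots> = glen (?T - A_min q s / q ^ n, ?T - ?b)" by (simp add: glen_def)
  finally have "glen G \<le> glen (?T - A_min q s / q ^ n, ?T - ?b)" using uv by (simp add: glen_def)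
  moreover have "(?T - A_min q s / q ^ n, ?T - ?b) \<noteq> G" using GC gapsD[OF GC(1)] uv by auto
  ultimately have "?T - ?b \<in> left_barriers ?C G"
    unfolding left_barriers_def using gap' GC(2) uv
    by (intro insertI2 image_eqI[where x = "(?T - A_min q s / q ^ n, ?T - ?b)"]) auto
  moreover have "Sup ?C = ?T"
    using \<open>?T \<in> ?C\<close> C_set_subset[OF q s] by (intro cSup_eq_maximum) auto
  then have "?T \<in> right_barriers ?C G" by (simp add: right_barriers_def)
  ultimately show "?T - ?b \<in> left_barriers ?C G \<and> ?T \<in> right_barriers ?C G" ..
qed

lemma pi_prefix_zeros_periodic:
  "pi_q q (eventually_periodic (replicate (s - 1) 0) (0 # replicate (Suc s) 1)) = W_val q s / q ^ (s - 1)"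
proof -
  have "binary_seq (eventually_periodic [] (0 # replicate (Suc s) 1))" by (rule binary_seq_periodic) auto
  then show ?thesis unfolding eventually_periodic_replicate W_val_def by (simp add: pi_prefix_run[OF q])
qed

lemma thickness_le_P_set:
  assumes k: "k = Suc (Suc s)"
  shows "thickness (C_set q s) \<le> thickness (P_set q k m i)"
proof -
  obtain \<alpha> \<beta> where ab: "0 < \<alpha>" "g_qk q k ^^ i = (\<lambda>x. \<alpha> * x + \<beta>)"
    using g_qk_funpow_affine q by (metis less_trans zero_less_one)
  define n where "n = s - 1 + (m - i) * k"
  have k1: "k - 1 = Suc s" "k - 3 = s - 1" using k by auto
  have "pi_q q (eventually_periodic (replicate (k - 3) 0) (0 # replicate (k - 1) 1)) / q ^ ((m - i) * k)
          = W_val q s / q ^ n"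
    unfolding k1 pi_prefix_zeros_periodic by (simp add: n_def power_add)
  moreover have "(g_qk q k ^^ i) ` ((\<lambda>x. x + 1) ` (pi_q q ` S_set (k - 1)))
                   = (\<lambda>x. \<alpha> * x + (\<alpha> + \<beta>)) ` C_set q s"
    unfolding ab(2) C_set_def k1 by (simp add: image_image algebra_simps)
  ultimately have "P_set q k m i = (\<lambda>x. \<alpha> * x + (\<alpha> + \<beta>)) ` C_set q s
               \<inter> {\<alpha> * 0 + (\<alpha> + \<beta>) .. \<alpha> * (W_val q s / q ^ n) + (\<alpha> + \<beta>)}"
    unfolding P_set_def by (simp add: ab(2) algebra_simps)
  also have "\<dots> = (\<lambda>x. \<alpha> * x + (\<alpha> + \<beta>)) ` (C_set q s \<inter> {0 .. A_max q s / q ^ Suc n})"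
    unfolding affine_image_Int_atLeastAtMost[OF ab(1)] C_set_cut ..
  finally show ?thesis using thickness_C_set_le_initial_segment[OF ab(1)] by simp
qed

lemma thickness_le_Q_set:
  assumes k: "k = Suc (Suc s)"
  shows "thickness (C_set q s) \<le> thickness (Q_set q k m)"
proof -
  obtain \<alpha> \<beta> where ab: "0 < \<alpha>" "g_qk q k ^^ m = (\<lambda>x. \<alpha> * x + \<beta>)"
    using g_qk_funpow_affine q by (metis less_trans zero_less_one)
  let ?T = "1 / (q - 1)" and ?n = "s - 1"
  have k1: "k - 1 = Suc s" "k - 3 = s - 1" using k by auto
  have bin: "binary_seq (eventually_periodic (replicate (s - 1) 0) (0 # replicate (Suc s) 1))"
    unfolding eventually_periodic_replicate by (intro binary_seq_prefix_run binary_seq_periodic) auto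
  have "pi_q q (eventually_periodic (replicate (k - 3) 1) (1 # replicate (k - 1) 0))
          = ?T - W_val q s / q ^ ?n"
    using pi_flip[OF q bin] flip_eventually_periodic[of "0 # replicate (Suc s) 1" "replicate (s - 1) 0"]
      pi_prefix_zeros_periodic unfolding k1 by simp
  moreover have "eventually_periodic [] [1] = (\<lambda>_. 1)" by (simp add: fun_eq_iff eventually_periodic_def)
  then have "pi_q q (eventually_periodic [] [1]) = ?T" using pi_ones[OF q] by simp
  ultimately have "Q_set q k m = (\<lambda>x. \<alpha> * x + \<beta>) ` C_set q s
               \<inter> {\<alpha> * (?T - W_val q s / q ^ ?n) + \<beta> .. \<alpha> * ?T + \<beta>}"
    unfolding Q_set_def ab(2) C_set_def k1 by simp
  also have "\<dots> = (\<lambda>x. \<alpha> * x + \<beta>) ` (C_set q s \<inter> {?T - A_max q s / q ^ Suc ?n .. ?T})"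
    unfolding affine_image_Int_atLeastAtMost[OF ab(1)]
      reflect_Int_atLeastAtMost[OF C_set_reflect[OF q s]] C_set_cut ..
  finally show ?thesis using thickness_C_set_le_final_segment[OF ab(1)] by simp
qed

end

end

theorem lemma3p2:
  fixes m k :: nat and q :: real
  assumes "k \<ge> 3" and "multinacci (k - 1) < q" and "q < 2"
  shows "(\<forall>i\<le>m. thickness (P_set q k m i) \<ge> thickness (pi_q q ` S_set (k - 1))) \<and>
         thickness (Q_set q k m) \<ge> thickness (pi_q q ` S_set (k - 1))"
proof -
  define s where "s = k - 2"
  have s: "1 \<le> s" and k: "k = Suc (Suc s)" using assms(1) by (auto simp: s_def)
  have "2 \<le> k - 1" using assms(1) by simp
  then have q: "1 < q" using multinacci_root(1) assms(2) by (metis order.strict_trans)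
  have H: "q * q ^ s * (2 - q) < 1" using multinacci_less_imp_power_bound[OF q s] assms(2,3) k by simp
  have C: "pi_q q ` S_set (k - 1) = C_set q s" by (simp add: C_set_def k)
  show ?thesis
    unfolding C using thickness_le_P_set[OF q s H k] thickness_le_Q_set[OF q s H k] by blast
qed

end
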